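(* Let $m$ be a positive measurable function on $\mathbb R$ with $\int_{\mathbb R}\frac{m(u)}{1+u^2}du<\infty$. Assume there exist constants $b<2$ and $K,C_1,C_2>0$ such that \[ m(u)\le K|u|^{-b}\ \text{ for } |u|\le1,\qquad m(u)\le C_1e^{C_2|u|}\ \text{ for } |u|\ge1. \] Then there exists a function $t\mapsto W_m(t)$ from $\mathbb R$ into the space $\mathcal L(\widetilde{\mathcal G}_1,\widetilde{\mathcal G}_{-1})$ of continuous linear operators such that, for every $f\in\widetilde{\mathcal G}_1$, \[ \frac{d}{dt}X_m(t)f=W_m(t)f \] in the topology of $\widetilde{\mathcal G}_{-1}$.
   Context: Let $(\widetilde h_n)_{n\ge1}$ be the normalized Hermite functions, an orthonormal basis of $\mathbf L_2(\mathbb R)$. For $p\in\mathbb Z$, define \[ \mathcal K_p=\Big\{\sum_nf_n\widetilde h_n:\sum_n|f_n|^22^{np}<\infty\Big\}, \] with the corresponding Hilbert norm. $\Gamma(\mathcal K_p)$ is its full Fock space, $\widetilde{\mathcal G}_1=\bigcap_{p\in\mathbb N}\Gamma(\mathcal K_p)$ (projective limit) and $\widetilde{\mathcal G}_{-1}=\bigcup_{p\in\mathbb N}\Gamma(\mathcal K_{-p})$ (inductive limit). For $g=\sum g_k\widetilde h_k\in\bigcup_p\mathcal K_p$: $\ell_gu=g\otimes u$ is the creation operator. The annihilation operator is $\ell_g^*\Omega=0$, $\ell_g^*(u_1\otimes\cdots\otimes u_n)=(\sum_k\overline{g_k}u_{1,k})u_2\otimes\cdots\otimes u_n$. The Fourier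 transform is $\widehat f(u)=\int e^{-iux}f(x)dx$, and $T_m$ is the Fourier multiplier $\widehat{T_mf}=\sqrt m\widehat f$. For $t<0$, $1_{[0,t]}:=-1_{[t,0]}$. Finally, $X_m(t)=\ell_{T_m1_{[0,t]}}+\ell^*_{T_m1_{[0,t]}}$. *)

theory Defs
  imports "HOL-Analysis.Analysis"
begin

fun hermite_poly :: "nat \<Rightarrow> real \<Rightarrow> real" where
  "hermite_poly 0 x = 1"
| "hermite_poly (Suc 0) x = 2 * x"
| "hermite_poly (Suc (Suc n)) x =
     2 * x * hermite_poly (Suc n) x - 2 * real (Suc n) * hermite_poly n x"

text \<open>Orthonormal Hermite functions in L2(R).  Index k (from 0) stands for the
  paper's normalized Hermite function with index k+1.\<close>
definition hermite_fun :: "nat \<Rightarrow> real \<Rightarrow> real" where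
  "hermite_fun k x = hermite_poly k x * exp (- (x^2) / 2)
                      / sqrt (2 ^ k * fact k * sqrt pi)"

definition fourier :: "(real \<Rightarrow> real) \<Rightarrow> real \<Rightarrow> complex" where
  "fourier f u = (LINT x|lborel. cis (- (u * x)) * complex_of_real (f x))"

definition ind0 :: "real \<Rightarrow> real \<Rightarrow> real" where
  "ind0 t x = (if 0 \<le> t then indicator {0..t} x else - indicator {t..0} x)"

text \<open>Hermite coefficients of T_m f, i.e. <T_m f, h_k>, computed by Parseval from
  the defining relation  (T_m f)^ = sqrt m * f^.\<close>
definition Tm_coeff :: "(real \<Rightarrow> real) \<Rightarrow> (real \<Rightarrow> real) \<Rightarrow> nat \<Rightarrow> complex" where
  "Tm_coeff m f k = (1 / (2 * pi)) *
     (LINT u|lborel. complex_of_real (sqrt (m u)) * fourier f u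
                       * cnj (fourier (hermite_fun k) u))"

text \<open>A vector of the full Fock space is given by its coefficients with respect to
  the orthogonal basis  h_{k1} \<otimes> ... \<otimes> h_{kn}  (the empty list is the vacuum).\<close>
type_synonym fock = "nat list \<Rightarrow> complex"

definition fock_weight :: "int \<Rightarrow> nat list \<Rightarrow> real" where
  "fock_weight p ks = (2::real) powr (real_of_int p * real (sum_list (map Suc ks)))"

definition fock_in :: "int \<Rightarrow> fock \<Rightarrow> bool" where
  "fock_in p F \<longleftrightarrow> (\<lambda>ks. (cmod (F ks))^2 * fock_weight p ks) summable_on UNIV"

definition fock_norm :: "int \<Rightarrow> fock \<Rightarrow> real" where
  "fock_norm p F = sqrt (\<Sum>\<^sub>\<infinity>ks. (cmod (F ks))^2 * fock_weight p ks)"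

definition G1 :: "fock set" where
  "G1 = {F. \<forall>p::nat. fock_in (int p) F}"

definition Gm1 :: "fock set" where
  "Gm1 = {F. \<exists>p::nat. fock_in (- int p) F}"

text \<open>Continuous seminorms of the (locally convex) inductive limit topology on Gm1:
  seminorms whose restriction to every step Gamma(K_{-p}) is continuous.\<close>
definition Gm1_seminorm :: "(fock \<Rightarrow> real) \<Rightarrow> bool" where
  "Gm1_seminorm q \<longleftrightarrow>
     (\<forall>x\<in>Gm1. 0 \<le> q x) \<and>
     (\<forall>x\<in>Gm1. \<forall>y\<in>Gm1. q (\<lambda>ks. x ks + y ks) \<le> q x + q y) \<and>
     (\<forall>x\<in>Gm1. \<forall>c. q (\<lambda>ks. c * x ks) = cmod c * q x) \<and>
     (\<forall>p::nat. \<exists>C. \<forall>x. fock_in (- int p) x \<longrightarrow> q x \<le> C * fock_norm (- int p) x)"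

definition Gm1_tendsto :: "('a \<Rightarrow> fock) \<Rightarrow> fock \<Rightarrow> 'a filter \<Rightarrow> bool" where
  "Gm1_tendsto D L F \<longleftrightarrow> L \<in> Gm1 \<and> eventually (\<lambda>h. D h \<in> Gm1) F \<and>
     (\<forall>q. Gm1_seminorm q \<longrightarrow> ((\<lambda>h. q (\<lambda>ks. D h ks - L ks)) \<longlongrightarrow> 0) F)"

definition cont_lin_G :: "(fock \<Rightarrow> fock) \<Rightarrow> bool" where
  "cont_lin_G T \<longleftrightarrow>
     (\<forall>F\<in>G1. T F \<in> Gm1) \<and>
     (\<forall>F\<in>G1. \<forall>H\<in>G1. T (\<lambda>ks. F ks + H ks) = (\<lambda>ks. T F ks + T H ks)) \<and>
     (\<forall>F\<in>G1. \<forall>c. T (\<lambda>ks. c * F ks) = (\<lambda>ks. c * T F ks)) \<and>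
     (\<forall>q. Gm1_seminorm q \<longrightarrow>
        (\<exists>p::nat. \<exists>C. \<forall>F\<in>G1. q (T F) \<le> C * fock_norm (int p) F))"

definition creation :: "(nat \<Rightarrow> complex) \<Rightarrow> fock \<Rightarrow> fock" where
  "creation g F = (\<lambda>ks. case ks of [] \<Rightarrow> 0 | k # ks' \<Rightarrow> g k * F ks')"

definition annihilation :: "(nat \<Rightarrow> complex) \<Rightarrow> fock \<Rightarrow> fock" where
  "annihilation g F = (\<lambda>ks. \<Sum>k. cnj (g k) * F (k # ks))"

definition Xm :: "(real \<Rightarrow> real) \<Rightarrow> real \<Rightarrow> fock \<Rightarrow> fock" where
  "Xm m t F = (\<lambda>ks. creation (Tm_coeff m (ind0 t)) F ks + annihilation (Tm_coeff m (ind0 t)) F ks)"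

end

(*
  In the Hermite basis X_m(t) is the field operator a(g) + a(g)^* with coefficients
  g_k(t) = <T_m 1_[0,t], h_k>.  By Parseval, and because the Hermite functions are eigenfunctions
  of the Fourier transform, g_k(t) = (2 pi)^-1 \<integral> sqrt(m u) conj(h_k^(u)) (1 - e^(-iut)) / (iu) du.
  The t-difference quotients of the last factor are bounded by 1 and converge to e^(-iut), while
  sqrt(m) |h_k^| <= (m / (1 + u^2) + 2 pi (1 + u^2) h_k^2) / 2 is integrable with integral O(k);
  so by dominated convergence the coefficients are differentiable, with derivative
  w_k(t) = (2 pi)^-1 \<integral> sqrt(m u) conj(h_k^(u)) e^(-iut) du, all bounded by C (k + 1).

  A field operator whose coefficients have finite K_-1 norm maps Gamma(K_1) boundedly into
  Gamma(K_-1).  Hence W_m(t) is the field operator with coefficients w(t), and a second dominated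
  convergence, over k, shows that the difference quotients of X_m converge to W_m(t) in operator
  norm Gamma(K_1) -> Gamma(K_-1), which is stronger than the convergence required in G_-1.
*)
theory Submission
  imports Defs "HOL-Probability.Probability" "HOL-Real_Asymp.Real_Asymp"
begin

section \<open>Hermite functions\<close>

lemma hermite_poly_Suc:
  "hermite_poly (Suc n) x = 2 * x * hermite_poly n x - 2 * real n * hermite_poly (n - 1) x"
  by (cases n) auto

lemma has_real_derivative_hermite_poly:
  "(hermite_poly n has_real_derivative 2 * real n * hermite_poly (n - 1) x) (at x)"
proof (induction n x rule: hermite_poly.induct)
  case (1 x)
  then show ?case by (simp add: fun_eq_iff[symmetric])
next
  case (2 x)
  have "((\<lambda>x. 2 * x) has_real_derivative 2) (at x)"
    by (auto intro!: derivative_eq_intros)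
  then show ?case by (simp add: fun_eq_iff)
next
  case (3 n x)
  have "hermite_poly (Suc (Suc n)) =
      (\<lambda>x. 2 * x * hermite_poly (Suc n) x - 2 * real (Suc n) * hermite_poly n x)"
    by (rule ext) simp
  moreover have "((\<lambda>x. 2 * x * hermite_poly (Suc n) x - 2 * real (Suc n) * hermite_poly n x)
      has_real_derivative 2 * hermite_poly (Suc n) x + 2 * x * (2 * real (Suc n) * hermite_poly n x)
        - 2 * real (Suc n) * (2 * real n * hermite_poly (n - 1) x)) (at x)"
    using 3 by (auto intro!: derivative_eq_intros)
  moreover have "2 * hermite_poly (Suc n) x + 2 * x * (2 * real (Suc n) * hermite_poly n x)
      - 2 * real (Suc n) * (2 * real n * hermite_poly (n - 1) x)
      = 2 * real (Suc (Suc n)) * hermite_poly (Suc (Suc n) - 1) x"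
    by (simp only: diff_Suc_1 hermite_poly_Suc[of n x]) (simp add: algebra_simps)
  ultimately show ?case by simp
qed

lemma continuous_on_hermite_poly: "continuous_on UNIV (hermite_poly n)"
  using has_real_derivative_hermite_poly
  by (meson DERIV_isCont continuous_at_imp_continuous_on)

lemma abs_hermite_poly_le: "\<bar>hermite_poly n x\<bar> \<le> (2 + 2 * \<bar>x\<bar> + 2 * real n) ^ n"
proof (induction n x rule: hermite_poly.induct)
  case (3 n x)
  define M where "M = 2 + 2 * \<bar>x\<bar> + 2 * real (Suc n)"
  have IH1: "\<bar>hermite_poly (Suc n) x\<bar> \<le> M ^ Suc n"
    using 3(1) unfolding M_def .
  have "(2 + 2 * \<bar>x\<bar> + 2 * real n) ^ n \<le> M ^ n"
    unfolding M_def by (intro power_mono) auto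
  with 3(2) have IH0: "\<bar>hermite_poly n x\<bar> \<le> M ^ n" by linarith
  have "\<bar>hermite_poly (Suc (Suc n)) x\<bar>
      \<le> 2 * \<bar>x\<bar> * \<bar>hermite_poly (Suc n) x\<bar> + 2 * real (Suc n) * \<bar>hermite_poly n x\<bar>"
    using abs_triangle_ineq4[of "2 * x * hermite_poly (Suc n) x" "2 * real (Suc n) * hermite_poly n x"]
    by (simp add: abs_mult)
  also have "\<dots> \<le> 2 * \<bar>x\<bar> * M ^ Suc n + M * M ^ n"
    by (intro add_mono mult_left_mono mult_mono IH0 IH1) (auto simp: M_def)
  also have "\<dots> \<le> M * M ^ Suc n"
    by (simp add: M_def algebra_simps)
  also have "\<dots> \<le> (2 + 2 * \<bar>x\<bar> + 2 * real (Suc (Suc n))) ^ Suc (Suc n)"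
    by (simp only: power_Suc[symmetric]) (intro power_mono, auto simp: M_def)
  finally show ?case .
qed simp_all

definition hermite_norm :: "nat \<Rightarrow> real" where
  "hermite_norm k = sqrt (2 ^ k * fact k * sqrt pi)"

lemma hermite_norm_pos: "hermite_norm k > 0"
  unfolding hermite_norm_def by simp

lemma hermite_norm_Suc: "hermite_norm (Suc k) = sqrt (2 * real (Suc k)) * hermite_norm k"
  unfolding hermite_norm_def by (simp add: real_sqrt_mult[symmetric] algebra_simps)

lemma hermite_fun_eq: "hermite_fun k x = hermite_poly k x * exp (- (x^2) / 2) / hermite_norm k"
  unfolding hermite_fun_def hermite_norm_def by simp

lemma x_mult_hermite_fun:
  "x * hermite_fun k x =
     (sqrt (2 * real k) * hermite_fun (k - 1) x + sqrt (2 * real (Suc k)) * hermite_fun (Suc k) x) / 2"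
proof (cases k)
  case 0
  then show ?thesis by (simp add: hermite_fun_eq hermite_norm_Suc field_simps)
next
  case (Suc j)
  \<comment> \<open>the square of \<open>sqrt (2 * real (Suc j))\<close>, in simp normal form\<close>
  have sq: "sqrt (2 + real j * 2) * (sqrt (2 + real j * 2) * c) = (2 + real j * 2) * c" for c
    by (simp add: mult.assoc[symmetric])
  show ?thesis using hermite_norm_pos[of j]
    by (simp add: Suc hermite_fun_eq hermite_norm_Suc field_simps del: hermite_poly.simps)
      (simp add: sq algebra_simps)
qed

definition hermite_fun_deriv :: "nat \<Rightarrow> real \<Rightarrow> real" where
  "hermite_fun_deriv k x =
     (sqrt (2 * real k) * hermite_fun (k - 1) x - sqrt (2 * real (Suc k)) * hermite_fun (Suc k) x) / 2"

lemma has_real_derivative_hermite_fun: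
  "(hermite_fun k has_real_derivative hermite_fun_deriv k x) (at x)"
proof -
  have "hermite_fun k = (\<lambda>x. hermite_poly k x * exp (- (x^2) / 2) / hermite_norm k)"
    by (rule ext) (simp add: hermite_fun_eq)
  then have "(hermite_fun k has_real_derivative
      (2 * real k * hermite_poly (k - 1) x * exp (- (x^2) / 2)
       - x * hermite_poly k x * exp (- (x^2) / 2)) / hermite_norm k) (at x)"
    using has_real_derivative_hermite_poly[of k x] hermite_norm_pos[of k]
    by (auto intro!: derivative_eq_intros simp: field_simps)
  moreover have "(2 * real k * hermite_poly (k - 1) x * exp (- (x^2) / 2)
       - x * hermite_poly k x * exp (- (x^2) / 2)) / hermite_norm k = hermite_fun_deriv k x"
  proof (cases k)
    case 0
    then show ?thesis by (simp add: hermite_fun_deriv_def hermite_fun_eq hermite_norm_Suc field_simps)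
  next
    case (Suc j)
    have sq: "sqrt (2 + real j * 2) * (sqrt (2 + real j * 2) * c) = (2 + real j * 2) * c" for c
      by (simp add: mult.assoc[symmetric])
    show ?thesis using hermite_norm_pos[of j]
      by (simp add: Suc hermite_fun_deriv_def hermite_fun_eq hermite_norm_Suc field_simps
          del: hermite_poly.simps)
        (simp add: sq algebra_simps)
  qed
  ultimately show ?thesis by simp
qed

section \<open>Functions dominated by the Gaussian\<close>

lemma integrable_poly_gaussian: "integrable lborel (\<lambda>x::real. (1 + \<bar>x\<bar>) ^ n * exp (- (x^2) / 2))"
proof (rule Bochner_Integration.integrable_bound)
  let ?g = "\<lambda>x. (2 ^ n * sqrt (2 * pi)) *
              (std_normal_density x * \<bar>x\<bar> ^ 0 + std_normal_density x * \<bar>x\<bar> ^ n)"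
  show "integrable lborel ?g"
    using integrable_std_normal_moment_abs[of 0] integrable_std_normal_moment_abs[of n] by auto
  show "(\<lambda>x::real. (1 + \<bar>x\<bar>) ^ n * exp (- (x^2) / 2)) \<in> borel_measurable lborel"
    by measurable
  show "AE x in lborel. norm ((1 + \<bar>x\<bar>) ^ n * exp (- (x^2) / 2)) \<le> norm (?g x)"
  proof (intro AE_I2)
    fix x :: real
    have "(1 + \<bar>x\<bar>) ^ n \<le> (2 * max 1 \<bar>x\<bar>) ^ n"
      by (intro power_mono) auto
    also have "\<dots> \<le> 2 ^ n * (1 + \<bar>x\<bar> ^ n)"
      by (cases "\<bar>x\<bar> \<le> 1") (auto simp: max_def power_mult_distrib power_le_one)
    finally have "(1 + \<bar>x\<bar>) ^ n * exp (- (x^2) / 2) \<le> 2 ^ n * (1 + \<bar>x\<bar> ^ n) * exp (- (x^2) / 2)"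
      by (intro mult_right_mono) auto
    also have "\<dots> = ?g x"
      by (simp add: std_normal_density_def field_simps)
    finally show "norm ((1 + \<bar>x\<bar>) ^ n * exp (- (x^2) / 2)) \<le> norm (?g x)"
      by (simp add: normal_density_nonneg)
  qed
qed

text \<open>The class containing the Hermite functions, their products and derivatives, on which
  integration by parts over \<open>\<real>\<close> has no boundary terms.\<close>
definition gauss_dominated :: "(real \<Rightarrow> 'a::real_normed_vector) \<Rightarrow> bool" where
  "gauss_dominated f \<longleftrightarrow> continuous_on UNIV f \<and>
     (\<exists>C n. \<forall>x. norm (f x) \<le> C * (1 + \<bar>x\<bar>) ^ n * exp (- (x^2) / 2))"

lemma gauss_dominatedE:
  assumes "gauss_dominated f"
  obtains C n where "C \<ge> 0" "continuous_on UNIV f"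
    "\<And>x. norm (f x) \<le> C * (1 + \<bar>x\<bar>) ^ n * exp (- (x^2) / 2)"
proof -
  obtain C n where f: "continuous_on UNIV f" "\<And>x. norm (f x) \<le> C * (1 + \<bar>x\<bar>) ^ n * exp (- (x^2) / 2)"
    using assms unfolding gauss_dominated_def by blast
  moreover have "norm (f 0) \<le> C"
    using f(2)[of 0] by simp
  then have "C \<ge> 0"
    using norm_ge_zero order_trans by blast
  ultimately show thesis using that by blast
qed

lemma gauss_dominated_integrable:
  fixes f :: "real \<Rightarrow> 'a::{banach, second_countable_topology}"
  assumes "gauss_dominated f"
  shows "integrable lborel f"
proof -
  obtain C n where f: "C \<ge> 0" "continuous_on UNIV f"
      "\<And>x. norm (f x) \<le> C * (1 + \<bar>x\<bar>) ^ n * exp (- (x^2) / 2)"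
    using gauss_dominatedE[OF assms] by blast
  show ?thesis
  proof (rule Bochner_Integration.integrable_bound)
    show "integrable lborel (\<lambda>x. C * ((1 + \<bar>x\<bar>) ^ n * exp (- (x^2) / 2)))"
      using integrable_poly_gaussian by auto
    show "f \<in> borel_measurable lborel"
      using borel_measurable_continuous_onI[OF f(2)] by simp
    show "AE x in lborel. norm (f x) \<le> norm (C * ((1 + \<bar>x\<bar>) ^ n * exp (- (x^2) / 2)))"
      using f(3) by (intro AE_I2) (smt (verit, best) mult.assoc real_norm_def)
  qed
qed

lemma gauss_dominated_tendsto_0:
  assumes "gauss_dominated f"
  shows "(f \<longlongrightarrow> 0) at_top" "(f \<longlongrightarrow> 0) at_bot"
proof -
  obtain C n where f: "\<And>x. norm (f x) \<le> C * ((1 + \<bar>x\<bar>) ^ n * exp (- (x^2) / 2))"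
    using assms by (metis gauss_dominatedE mult.assoc)
  have "((\<lambda>x::real. C * ((1 + \<bar>x\<bar>) ^ n * exp (- (x^2) / 2))) \<longlongrightarrow> 0) at_top"
    by (intro tendsto_mult_right_zero) real_asymp
  then show "(f \<longlongrightarrow> 0) at_top"
    by (rule Lim_null_comparison[rotated]) (use f in auto)
  have "((\<lambda>x::real. C * ((1 + \<bar>x\<bar>) ^ n * exp (- (x^2) / 2))) \<longlongrightarrow> 0) at_bot"
    by (intro tendsto_mult_right_zero) real_asymp
  then show "(f \<longlongrightarrow> 0) at_bot"
    by (rule Lim_null_comparison[rotated]) (use f in auto)
qed

lemma gauss_dominated_add:
  assumes "gauss_dominated f" "gauss_dominated g"
  shows "gauss_dominated (\<lambda>x. f x + g x)"
proof -
  obtain C n where f: "C \<ge> 0" "continuous_on UNIV f"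
      "\<And>x. norm (f x) \<le> C * (1 + \<bar>x\<bar>) ^ n * exp (- (x^2) / 2)"
    using gauss_dominatedE[OF assms(1)] by blast
  obtain D m where g: "D \<ge> 0" "continuous_on UNIV g"
      "\<And>x. norm (g x) \<le> D * (1 + \<bar>x\<bar>) ^ m * exp (- (x^2) / 2)"
    using gauss_dominatedE[OF assms(2)] by blast
  have "norm (f x + g x) \<le> (C + D) * (1 + \<bar>x\<bar>) ^ max n m * exp (- (x^2) / 2)" for x
  proof -
    have "norm (f x + g x) \<le> C * (1 + \<bar>x\<bar>) ^ n * exp (- (x^2) / 2) + D * (1 + \<bar>x\<bar>) ^ m * exp (- (x^2) / 2)"
      using norm_triangle_ineq[of "f x" "g x"] f(3)[of x] g(3)[of x] by linarith
    also have "\<dots> \<le> C * (1 + \<bar>x\<bar>) ^ max n m * exp (- (x^2) / 2) + D * (1 + \<bar>x\<bar>) ^ max n m * exp (- (x^2) / 2)"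
      using f(1) g(1) by (intro add_mono mult_right_mono mult_left_mono power_increasing) auto
    finally show ?thesis by (simp add: algebra_simps)
  qed
  then show ?thesis
    unfolding gauss_dominated_def using f(2) g(2) by (auto intro!: continuous_intros)
qed

lemma gauss_dominated_mult_poly_bounded:
  fixes f g :: "real \<Rightarrow> 'a::real_normed_algebra"
  assumes "gauss_dominated f" "continuous_on UNIV g" "\<And>x. norm (g x) \<le> B * (1 + \<bar>x\<bar>) ^ k"
  shows "gauss_dominated (\<lambda>x. g x * f x)"
proof -
  obtain C n where f: "C \<ge> 0" "continuous_on UNIV f"
      "\<And>x. norm (f x) \<le> C * (1 + \<bar>x\<bar>) ^ n * exp (- (x^2) / 2)"
    using gauss_dominatedE[OF assms(1)] by blast
  have "norm (g x * f x) \<le> (B * C) * (1 + \<bar>x\<bar>) ^ (k + n) * exp (- (x^2) / 2)" for x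
  proof -
    have "norm (g x * f x) \<le> (B * (1 + \<bar>x\<bar>) ^ k) * (C * (1 + \<bar>x\<bar>) ^ n * exp (- (x^2) / 2))"
      using norm_mult_ineq[of "g x" "f x"] assms(3)[of x] f(3)[of x] norm_ge_zero[of "g x"] norm_ge_zero[of "f x"]
      by (smt (verit) mult_mono)
    then show ?thesis by (simp add: power_add algebra_simps)
  qed
  then show ?thesis
    unfolding gauss_dominated_def using f(2) assms(2) by (auto intro!: continuous_intros)
qed

lemma gauss_dominated_mult:
  fixes f g :: "real \<Rightarrow> 'a::real_normed_algebra"
  assumes "gauss_dominated f" "gauss_dominated g"
  shows "gauss_dominated (\<lambda>x. f x * g x)"
proof -
  obtain C n where f: "C \<ge> 0" "continuous_on UNIV f"
      "\<And>x. norm (f x) \<le> C * (1 + \<bar>x\<bar>) ^ n * exp (- (x^2) / 2)"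
    using gauss_dominatedE[OF assms(1)] by blast
  have "norm (f x) \<le> C * (1 + \<bar>x\<bar>) ^ n" for x
  proof -
    have "C * (1 + \<bar>x\<bar>) ^ n * exp (- (x^2) / 2) \<le> C * (1 + \<bar>x\<bar>) ^ n"
      using f(1) by (intro mult_left_le) auto
    then show ?thesis using f(3)[of x] by linarith
  qed
  then show ?thesis
    using f(2) by (intro gauss_dominated_mult_poly_bounded[OF assms(2)])
qed

lemma gauss_dominated_scaled:
  fixes f :: "real \<Rightarrow> 'a::real_normed_algebra_1"
  assumes "gauss_dominated f"
  shows "gauss_dominated (\<lambda>x. c * f x)"
  using gauss_dominated_mult_poly_bounded[OF assms, of "\<lambda>_. c" "norm c" 0] by simp

lemma gauss_dominated_of_real:
  "gauss_dominated f \<Longrightarrow> gauss_dominated (\<lambda>x. complex_of_real (f x))"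
  unfolding gauss_dominated_def by (auto intro!: continuous_intros)

lemma gauss_dominated_gaussian: "gauss_dominated (\<lambda>x::real. exp (- (x^2) / 2))"
proof -
  have "continuous_on UNIV (\<lambda>x::real. exp (- (x^2) / 2))"
    by (intro continuous_intros) auto
  moreover have "\<forall>x::real. norm (exp (- (x^2) / 2)) \<le> 1 * (1 + \<bar>x\<bar>) ^ 0 * exp (- (x^2) / 2)"
    by simp
  ultimately show ?thesis
    unfolding gauss_dominated_def by blast
qed

lemma gauss_dominated_hermite_fun: "gauss_dominated (hermite_fun k)"
proof -
  have "\<bar>hermite_fun k x\<bar> \<le> ((2 + 2 * real k) ^ k / hermite_norm k) * (1 + \<bar>x\<bar>) ^ k * exp (- (x^2) / 2)" for x
  proof -
    have "\<bar>hermite_poly k x\<bar> \<le> (2 + 2 * \<bar>x\<bar> + 2 * real k) ^ k"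
      by (rule abs_hermite_poly_le)
    also have "\<dots> \<le> ((2 + 2 * real k) * (1 + \<bar>x\<bar>)) ^ k"
      by (intro power_mono) (auto simp: algebra_simps)
    finally show ?thesis
      using hermite_norm_pos[of k]
      by (simp add: hermite_fun_eq abs_mult divide_simps power_mult_distrib mult_right_mono)
  qed
  moreover have "continuous_on UNIV (hermite_fun k)"
    unfolding hermite_fun_eq[abs_def] using continuous_on_hermite_poly[of k] hermite_norm_pos[of k]
    by (auto intro!: continuous_intros)
  ultimately show ?thesis
    unfolding gauss_dominated_def real_norm_def by blast
qed

lemma hermite_fun_deriv_eq:
  "hermite_fun_deriv k = (\<lambda>x. (sqrt (2 * real k) / 2) * hermite_fun (k - 1) x
                             + (- sqrt (2 * real (Suc k)) / 2) * hermite_fun (Suc k) x)"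
  by (auto simp: hermite_fun_deriv_def fun_eq_iff field_simps)

lemma gauss_dominated_hermite_fun_deriv: "gauss_dominated (hermite_fun_deriv k)"
  unfolding hermite_fun_deriv_eq
  by (intro gauss_dominated_add gauss_dominated_scaled gauss_dominated_hermite_fun)

section \<open>Fourier transform of Hermite functions\<close>

lemma integral_eq_0_if_antiderivative_vanishes:
  fixes F f :: "real \<Rightarrow> 'a::euclidean_space"
  assumes "\<And>x. (F has_vector_derivative f x) (at x)" "\<And>x. isCont f x" "integrable lborel f"
    and "(F \<longlongrightarrow> 0) at_top" "(F \<longlongrightarrow> 0) at_bot"
  shows "integral\<^sup>L lborel f = 0"
proof -
  have "(LBINT x=-\<infinity>..\<infinity>. f x) = 0 - 0"
    by (rule interval_integral_FTC_integrable[where F=F])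
      (use assms in \<open>auto simp: ereal_tendsto_simps set_integrable_def\<close>)
  then show ?thesis
    by (simp add: interval_lebesgue_integral_def set_lebesgue_integral_def)
qed

lemma has_vector_derivative_cis_linear:
  "((\<lambda>x. cis (- (u * x))) has_vector_derivative - \<i> * complex_of_real u * cis (- (u * x))) (at x)"
proof -
  have "((\<lambda>z. exp (- \<i> * complex_of_real u * z)) has_field_derivative
      exp (- \<i> * complex_of_real u * complex_of_real x) * (- \<i> * complex_of_real u)) (at (complex_of_real x))"
    by (auto intro!: derivative_eq_intros)
  from has_vector_derivative_real_field[OF this] show ?thesis
    by (simp add: cis_conv_exp algebra_simps)
qed

lemma continuous_on_cis_linear: "continuous_on UNIV (\<lambda>x. cis (- (u * x)))"
  by (intro continuous_intros)

lemma gauss_dominated_fourier_integrand: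
  "gauss_dominated f \<Longrightarrow> gauss_dominated (\<lambda>x. cis (- (u * x)) * complex_of_real (f x))"
  by (rule gauss_dominated_mult_poly_bounded[where B=1 and k=0])
    (auto intro: gauss_dominated_of_real continuous_on_cis_linear)

lemma integrable_fourier_integrand:
  "gauss_dominated f \<Longrightarrow> integrable lborel (\<lambda>x. cis (- (u * x)) * complex_of_real (f x))"
  by (intro gauss_dominated_integrable gauss_dominated_fourier_integrand)

lemma fourier_gaussian:
  "fourier (\<lambda>x. exp (- (x^2) / 2)) u = complex_of_real (sqrt (2 * pi) * exp (- (u^2) / 2))"
proof -
  have "complex_of_real (exp (- ((- u)^2) / 2)) = char std_normal_distribution (- u)"
    by (simp add: char_std_normal_distribution)
  also have "\<dots> = (LINT x|lborel. std_normal_density x *\<^sub>R iexp (- u * x))"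
    unfolding char_def by (rule integral_density) (auto simp: normal_density_nonneg)
  also have "\<dots> = (LINT x|lborel. complex_of_real (1 / sqrt (2 * pi)) *
                    (cis (- (u * x)) * complex_of_real (exp (- (x^2) / 2))))"
    by (rule Bochner_Integration.integral_cong)
      (auto simp: std_normal_density_def scaleR_conv_of_real cis_conv_exp)
  also have "\<dots> = complex_of_real (1 / sqrt (2 * pi)) * fourier (\<lambda>x. exp (- (x^2) / 2)) u"
    unfolding fourier_def by simp
  finally show ?thesis
    by (simp add: field_simps)
qed

lemma fourier_deriv:
  assumes f': "\<And>x. (f has_real_derivative f' x) (at x)"
    and "gauss_dominated f" "gauss_dominated f'"
  shows "fourier f' u = \<i> * complex_of_real u * fourier f u"
proof -
  let ?F = "\<lambda>x. cis (- (u * x)) * complex_of_real (f x)"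
  let ?A = "\<lambda>x. cis (- (u * x)) * complex_of_real (f' x)"
  let ?B = "\<lambda>x. (- \<i> * complex_of_real u) * ?F x"
  have A: "gauss_dominated ?A"
    using assms(3) by (rule gauss_dominated_fourier_integrand)
  have B: "gauss_dominated ?B"
    using gauss_dominated_fourier_integrand[OF assms(2)] by (rule gauss_dominated_scaled)
  have "integral\<^sup>L lborel (\<lambda>x. ?A x + ?B x) = 0"
  proof (rule integral_eq_0_if_antiderivative_vanishes[where F = ?F])
    show "(?F has_vector_derivative ?A x + ?B x) (at x)" for x
    proof -
      have "(?F has_vector_derivative cis (- (u * x)) * complex_of_real (f' x)
          + (- \<i> * complex_of_real u * cis (- (u * x))) * complex_of_real (f x)) (at x)"
        by (rule has_vector_derivative_mult[OF has_vector_derivative_cis_linear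
              has_vector_derivative_of_real[OF f']])
      then show ?thesis by (simp add: algebra_simps)
    qed
    have AB: "gauss_dominated (\<lambda>x. ?A x + ?B x)"
      using A B by (rule gauss_dominated_add)
    then show "isCont (\<lambda>x. ?A x + ?B x) x" for x
      by (simp add: gauss_dominated_def continuous_on_eq_continuous_at)
    show "integrable lborel (\<lambda>x. ?A x + ?B x)"
      using AB by (rule gauss_dominated_integrable)
    show "(?F \<longlongrightarrow> 0) at_top" "(?F \<longlongrightarrow> 0) at_bot"
      using gauss_dominated_tendsto_0 gauss_dominated_fourier_integrand assms(2) by blast+
  qed
  then have "integral\<^sup>L lborel ?A + integral\<^sup>L lborel ?B = 0"
    using gauss_dominated_integrable[OF A] gauss_dominated_integrable[OF B] by simp
  moreover have "integral\<^sup>L lborel ?B = (- \<i> * complex_of_real u) * fourier f u"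
    unfolding fourier_def by simp
  ultimately show ?thesis
    unfolding fourier_def by (simp add: algebra_simps add_eq_0_iff)
qed

lemma fourier_linear:
  assumes "gauss_dominated f" "gauss_dominated g"
  shows "fourier (\<lambda>x. a * f x + b * g x) u = complex_of_real a * fourier f u + complex_of_real b * fourier g u"
proof -
  have "fourier (\<lambda>x. a * f x + b * g x) u =
      (LINT x|lborel. complex_of_real a * (cis (- (u * x)) * complex_of_real (f x))
                    + complex_of_real b * (cis (- (u * x)) * complex_of_real (g x)))"
    unfolding fourier_def by (rule Bochner_Integration.integral_cong) (auto simp: algebra_simps)
  also have "\<dots> = complex_of_real a * fourier f u + complex_of_real b * fourier g u"
    unfolding fourier_def using integrable_fourier_integrand[OF assms(1)] integrable_fourier_integrand[OF assms(2)]
    by (subst Bochner_Integration.integral_add) auto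
  finally show ?thesis .
qed

lemma fourier_hermite_fun_Suc:
  "complex_of_real (sqrt (2 * real (Suc k))) * fourier (hermite_fun (Suc k)) u =
     complex_of_real (sqrt (2 * real k)) * fourier (hermite_fun (k - 1)) u
     - 2 * \<i> * complex_of_real u * fourier (hermite_fun k) u"
proof -
  have "\<i> * complex_of_real u * fourier (hermite_fun k) u = fourier (hermite_fun_deriv k) u"
    by (rule fourier_deriv[symmetric, OF has_real_derivative_hermite_fun
          gauss_dominated_hermite_fun gauss_dominated_hermite_fun_deriv])
  also have "\<dots> = complex_of_real (sqrt (2 * real k) / 2) * fourier (hermite_fun (k - 1)) u
      + complex_of_real (- sqrt (2 * real (Suc k)) / 2) * fourier (hermite_fun (Suc k)) u"
    unfolding hermite_fun_deriv_eq by (intro fourier_linear gauss_dominated_hermite_fun)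
  finally show ?thesis
    by (simp add: field_simps)
qed

lemma fourier_hermite_fun_0:
  "fourier (hermite_fun 0) u = complex_of_real (sqrt (2 * pi)) * complex_of_real (hermite_fun 0 u)"
proof -
  have "hermite_fun 0 = (\<lambda>x. (1 / hermite_norm 0) * exp (- (x^2) / 2) + 0 * exp (- (x^2) / 2))"
    by (rule ext) (simp add: hermite_fun_eq)
  then have "fourier (hermite_fun 0) u = complex_of_real (1 / hermite_norm 0) * fourier (\<lambda>x. exp (- (x^2) / 2)) u
      + complex_of_real 0 * fourier (\<lambda>x. exp (- (x^2) / 2)) u"
    by (simp only: fourier_linear[OF gauss_dominated_gaussian gauss_dominated_gaussian])
  then show ?thesis
    unfolding fourier_gaussian by (simp add: hermite_fun_eq[of 0 u])
qed

text \<open>Both sides satisfy the three-term recursion \<open>fourier_hermite_fun_Suc\<close>: the right-hand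
  side by \<open>x_mult_hermite_fun\<close>.\<close>
theorem fourier_hermite_fun:
  "fourier (hermite_fun k) u = complex_of_real (sqrt (2 * pi)) * (- \<i>) ^ k * complex_of_real (hermite_fun k u)"
proof (induction k u rule: hermite_poly.induct)
  case (1 u)
  then show ?case by (simp add: fourier_hermite_fun_0)
next
  case (2 u)
  have x: "2 * u * hermite_fun 0 u = sqrt 2 * hermite_fun 1 u"
    using x_mult_hermite_fun[of u 0] by simp
  have "complex_of_real (sqrt 2) * fourier (hermite_fun 1) u = - 2 * \<i> * complex_of_real u * fourier (hermite_fun 0) u"
    using fourier_hermite_fun_Suc[of 0 u] by simp
  also have "\<dots> = - \<i> * complex_of_real (sqrt (2 * pi)) * complex_of_real (2 * u * hermite_fun 0 u)"
    unfolding fourier_hermite_fun_0 by (simp add: algebra_simps)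
  also have "\<dots> = complex_of_real (sqrt 2) * (complex_of_real (sqrt (2 * pi)) * (- \<i>) * complex_of_real (hermite_fun 1 u))"
    unfolding x by (simp add: algebra_simps)
  finally have "fourier (hermite_fun 1) u = complex_of_real (sqrt (2 * pi)) * (- \<i>) * complex_of_real (hermite_fun 1 u)"
    by (rule mult_left_cancel[THEN iffD1, rotated]) simp
  then show ?case by simp
next
  case (3 n u)
  have "complex_of_real (sqrt (2 * real (Suc (Suc n)))) * fourier (hermite_fun (Suc (Suc n))) u
      = complex_of_real (sqrt (2 * pi)) * (- \<i>) ^ Suc (Suc n) *
        (2 * complex_of_real (u * hermite_fun (Suc n) u)
         - complex_of_real (sqrt (2 * real (Suc n)) * hermite_fun n u))"
    using fourier_hermite_fun_Suc[of "Suc n" u] 3 by (simp add: algebra_simps)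
  also have "\<dots> = complex_of_real (sqrt (2 * real (Suc (Suc n)))) *
      (complex_of_real (sqrt (2 * pi)) * (- \<i>) ^ Suc (Suc n) * complex_of_real (hermite_fun (Suc (Suc n)) u))"
    unfolding x_mult_hermite_fun[of u "Suc n"] by (simp add: field_simps)
  finally show ?case
    by (rule mult_left_cancel[THEN iffD1, rotated]) simp
qed

section \<open>Weighted norms of Hermite functions\<close>

lemma integral_hermite_fun_sq_Suc:
  "(LINT x|lborel. (hermite_fun (Suc k) x)^2) = (LINT x|lborel. (hermite_fun k x)^2)"
proof -
  let ?b = "sqrt (2 * real (Suc k))"
  let ?D = "\<lambda>x. hermite_fun_deriv k x * hermite_fun (Suc k) x + hermite_fun k x * hermite_fun_deriv (Suc k) x"
  have lower: "x * hermite_fun k x - hermite_fun_deriv k x = ?b * hermite_fun (Suc k) x" for x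
    using x_mult_hermite_fun[of x k] by (simp add: hermite_fun_deriv_def field_simps)
  have raise: "x * hermite_fun (Suc k) x + hermite_fun_deriv (Suc k) x = ?b * hermite_fun k x" for x
    using x_mult_hermite_fun[of x "Suc k"] by (simp add: hermite_fun_deriv_def field_simps)
  have diff: "?b * (hermite_fun (Suc k) x)^2 - ?b * (hermite_fun k x)^2 = - ?D x" for x
  proof -
    have "?b * (hermite_fun (Suc k) x)^2 = (x * hermite_fun k x - hermite_fun_deriv k x) * hermite_fun (Suc k) x"
      unfolding lower by (simp add: power2_eq_square)
    moreover have "?b * (hermite_fun k x)^2 = hermite_fun k x * (x * hermite_fun (Suc k) x + hermite_fun_deriv (Suc k) x)"
      unfolding raise by (simp add: power2_eq_square)
    ultimately show ?thesis by (simp add: algebra_simps)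
  qed
  have D: "gauss_dominated ?D"
    by (intro gauss_dominated_add gauss_dominated_mult gauss_dominated_hermite_fun_deriv gauss_dominated_hermite_fun)
  have hh: "gauss_dominated (\<lambda>x. hermite_fun k x * hermite_fun (Suc k) x)"
    by (intro gauss_dominated_mult gauss_dominated_hermite_fun)
  have "(LINT x|lborel. ?D x) = 0"
  proof (rule integral_eq_0_if_antiderivative_vanishes[where F = "\<lambda>x. hermite_fun k x * hermite_fun (Suc k) x"])
    show "((\<lambda>x. hermite_fun k x * hermite_fun (Suc k) x) has_vector_derivative ?D x) (at x)" for x
      using DERIV_mult[OF has_real_derivative_hermite_fun[of k x] has_real_derivative_hermite_fun[of "Suc k" x]]
      by (simp add: has_real_derivative_iff_has_vector_derivative algebra_simps)
    show "isCont ?D x" for x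
      using D by (simp add: gauss_dominated_def continuous_on_eq_continuous_at)
  qed (use D hh in \<open>auto intro: gauss_dominated_integrable gauss_dominated_tendsto_0\<close>)
  then have "(LINT x|lborel. ?b * (hermite_fun (Suc k) x)^2 - ?b * (hermite_fun k x)^2) = 0"
    unfolding diff Bochner_Integration.integral_minus by simp
  moreover have "integrable lborel (\<lambda>x. (hermite_fun j x)^2)" for j
    using gauss_dominated_integrable[OF gauss_dominated_mult[OF gauss_dominated_hermite_fun gauss_dominated_hermite_fun]]
    by (simp add: power2_eq_square)
  ultimately have "?b * (LINT x|lborel. (hermite_fun (Suc k) x)^2) - ?b * (LINT x|lborel. (hermite_fun k x)^2) = 0"
    by simp
  then show ?thesis by simp
qed

lemma integrable_hermite_fun_sq: "integrable lborel (\<lambda>x. (hermite_fun k x)^2)"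
  using gauss_dominated_integrable[OF gauss_dominated_mult[OF gauss_dominated_hermite_fun gauss_dominated_hermite_fun]]
  by (simp add: power2_eq_square)

lemma integral_hermite_fun_sq: "(LINT x|lborel. (hermite_fun k x)^2) = 1"
proof (induction k)
  case 0
  have "has_bochner_integral lborel (\<lambda>x. exp (- x\<^sup>2) * x ^ (2 * 0)) (sqrt pi * (fact (2 * 0) / (2 ^ (2 * 0) * fact 0)))"
    using has_bochner_integral_even_function[OF gaussian_moment_even_pos[where k=0]] by simp
  then have "(LINT x|lborel. exp (- x\<^sup>2)) = sqrt pi"
    by (simp add: has_bochner_integral_integral_eq)
  moreover have "(hermite_fun 0 x)^2 = exp (- x\<^sup>2) / sqrt pi" for x
  proof -
    have "(exp (- x\<^sup>2 / 2))^2 = exp (- x\<^sup>2)"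
      by (simp add: power2_eq_square flip: exp_add)
    then show ?thesis
      by (simp add: hermite_fun_eq hermite_norm_def power_divide)
  qed
  ultimately show ?case by simp
qed (simp add: integral_hermite_fun_sq_Suc)

lemma integrable_hermite_fun_sq_weighted: "integrable lborel (\<lambda>x. (1 + x^2) * (hermite_fun k x)^2)"
proof -
  have "gauss_dominated (\<lambda>x. (1 + x^2) * (hermite_fun k x * hermite_fun k x))"
  proof (rule gauss_dominated_mult_poly_bounded[where B=1 and k=2])
    show "norm (1 + x^2) \<le> 1 * (1 + \<bar>x\<bar>) ^ 2" for x :: real
      by (simp add: power2_eq_square algebra_simps)
  qed (auto intro!: gauss_dominated_mult gauss_dominated_hermite_fun continuous_intros)
  then show ?thesis
    by (simp add: gauss_dominated_integrable power2_eq_square)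
qed

lemma integral_hermite_fun_sq_weighted_le:
  "(LINT x|lborel. (1 + x^2) * (hermite_fun k x)^2) \<le> 2 * real k + 2"
proof -
  let ?a = "sqrt (2 * real k)" and ?b = "sqrt (2 * real (Suc k))"
  have pointwise: "(1 + x^2) * (hermite_fun k x)^2
      \<le> (hermite_fun k x)^2 + real k * (hermite_fun (k - 1) x)^2 + real (Suc k) * (hermite_fun (Suc k) x)^2" for x
  proof -
    have "(x * hermite_fun k x)^2 = ((?a * hermite_fun (k - 1) x + ?b * hermite_fun (Suc k) x) / 2)^2"
      by (simp only: x_mult_hermite_fun)
    also have "\<dots> \<le> ((?a * hermite_fun (k - 1) x)^2 + (?b * hermite_fun (Suc k) x)^2) / 2"
      using sum_squares_bound[of "?a * hermite_fun (k - 1) x" "?b * hermite_fun (Suc k) x"]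
      by (simp add: power2_eq_square field_simps)
    also have "\<dots> = real k * (hermite_fun (k - 1) x)^2 + real (Suc k) * (hermite_fun (Suc k) x)^2"
      by (simp add: power_mult_distrib)
    finally show ?thesis
      by (simp add: algebra_simps power_mult_distrib)
  qed
  have "(LINT x|lborel. (1 + x^2) * (hermite_fun k x)^2)
      \<le> (LINT x|lborel. (hermite_fun k x)^2 + real k * (hermite_fun (k - 1) x)^2 + real (Suc k) * (hermite_fun (Suc k) x)^2)"
    by (intro integral_mono[OF integrable_hermite_fun_sq_weighted _ pointwise]
        Bochner_Integration.integrable_add integrable_mult_right integrable_hermite_fun_sq)
  also have "\<dots> = 1 + real k + real (Suc k)"
    using integrable_hermite_fun_sq by (simp add: integral_hermite_fun_sq)
  finally show ?thesis by simp
qed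

section \<open>Fourier transform of indicator functions\<close>

definition ind0_hat :: "real \<Rightarrow> real \<Rightarrow> complex" where
  "ind0_hat t u = (if u = 0 then complex_of_real t else (1 - cis (- (u * t))) / (\<i> * complex_of_real u))"

lemma fourier_ind0_eq_interval_integral: "fourier (ind0 t) u = (LBINT x=ereal 0..ereal t. cis (- (u * x)))"
proof (cases "0 \<le> t")
  case True
  have "fourier (ind0 t) u = (LBINT x:{0..t}. cis (- (u * x)))"
    unfolding fourier_def set_lebesgue_integral_def ind0_def using True
    by (intro Bochner_Integration.integral_cong) (auto simp: indicator_def)
  then show ?thesis using True by (simp add: interval_integral_Icc)
next
  case False
  have "fourier (ind0 t) u = (LINT x|lborel. - (indicator {t..0} x *\<^sub>R cis (- (u * x))))"
    unfolding fourier_def ind0_def using False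
    by (intro Bochner_Integration.integral_cong) (auto simp: indicator_def)
  also have "\<dots> = - (LBINT x=ereal t..ereal 0. cis (- (u * x)))"
    using False by (simp add: set_lebesgue_integral_def interval_integral_Icc)
  also have "\<dots> = (LBINT x=ereal 0..ereal t. cis (- (u * x)))"
    by (simp add: interval_integral_endpoints_reverse[of "ereal 0" "ereal t"])
  finally show ?thesis .
qed

lemma fourier_ind0: "fourier (ind0 t) u = ind0_hat t u"
proof (cases "u = 0")
  case True
  have "(LBINT x=ereal 0..ereal t. cis (- (u * x))) = complex_of_real t - complex_of_real 0"
    by (rule interval_integral_FTC_finite)
      (auto simp: True intro!: derivative_eq_intros continuous_intros)
  then show ?thesis
    using True by (simp add: fourier_ind0_eq_interval_integral ind0_hat_def)
next
  case False
  have "(LBINT x=ereal 0..ereal t. cis (- (u * x)))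
      = cis (- (u * t)) / (- \<i> * complex_of_real u) - cis (- (u * 0)) / (- \<i> * complex_of_real u)"
  proof (rule interval_integral_FTC_finite)
    show "continuous_on {min 0 t..max 0 t} (\<lambda>x. cis (- (u * x)))"
      by (intro continuous_intros)
    have "((\<lambda>x. cis (- (u * x)) / (- \<i> * complex_of_real u)) has_vector_derivative
        (- \<i> * complex_of_real u * cis (- (u * x))) / (- \<i> * complex_of_real u)) (at x)" for x
      by (rule has_vector_derivative_divide[OF has_vector_derivative_cis_linear])
    then have "((\<lambda>x. cis (- (u * x)) / (- \<i> * complex_of_real u)) has_vector_derivative cis (- (u * x))) (at x)" for x
      using False by simp
    then show "((\<lambda>x. cis (- (u * x)) / (- \<i> * complex_of_real u)) has_vector_derivative cis (- (u * x)))
        (at x within {min 0 t..max 0 t})" for x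
      by (rule has_vector_derivative_at_within)
  qed
  then show ?thesis
    using False unfolding fourier_ind0_eq_interval_integral ind0_hat_def by (simp add: field_simps)
qed

lemma norm_one_minus_cis_le: "cmod (1 - cis a) \<le> \<bar>a\<bar>"
  using iexp_approx1[of a 0] by (simp add: cis_conv_exp norm_minus_commute)

lemma norm_ind0_hat_le: "cmod (ind0_hat t u) \<le> \<bar>t\<bar>"
proof (cases "u = 0")
  case False
  have "cmod (ind0_hat t u) = cmod (1 - cis (- (u * t))) / \<bar>u\<bar>"
    using False by (simp add: ind0_hat_def norm_divide norm_mult)
  also have "\<dots> \<le> \<bar>u * t\<bar> / \<bar>u\<bar>"
    using norm_one_minus_cis_le[of "- (u * t)"] by (simp add: divide_right_mono)
  finally show ?thesis
    using False by (simp add: abs_mult)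
qed (simp add: ind0_hat_def)

lemma ind0_hat_diff:
  "ind0_hat (t + h) u - ind0_hat t u =
     (if u = 0 then complex_of_real h else cis (- (u * t)) * (1 - cis (- (u * h))) / (\<i> * complex_of_real u))"
proof (cases "u = 0")
  case False
  have "cis (- (u * (t + h))) = cis (- (u * t)) * cis (- (u * h))"
    by (simp add: cis_mult algebra_simps)
  then show ?thesis
    using False by (simp add: ind0_hat_def field_simps)
qed (simp add: ind0_hat_def)

lemma norm_ind0_hat_diff_quotient_le: "cmod ((ind0_hat (t + h) u - ind0_hat t u) / complex_of_real h) \<le> 1"
proof (cases "u = 0 \<or> h = 0")
  case True
  then show ?thesis by (auto simp: ind0_hat_diff)
next
  case False
  have "cmod (ind0_hat (t + h) u - ind0_hat t u) = cmod (1 - cis (- (u * h))) / \<bar>u\<bar>"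
    using False by (simp add: ind0_hat_diff norm_divide norm_mult)
  also have "\<dots> \<le> \<bar>u * h\<bar> / \<bar>u\<bar>"
    using norm_one_minus_cis_le[of "- (u * h)"] by (simp add: divide_right_mono)
  finally show ?thesis
    using False by (simp add: abs_mult norm_divide divide_le_eq)
qed

lemma ind0_hat_diff_quotient_tendsto:
  "((\<lambda>h. (ind0_hat (t + h) u - ind0_hat t u) / complex_of_real h) \<longlongrightarrow> cis (- (u * t))) (at 0)"
proof (cases "u = 0")
  case True
  have "eventually (\<lambda>h. (ind0_hat (t + h) u - ind0_hat t u) / complex_of_real h = 1) (at 0)"
    using True by (auto simp: ind0_hat_diff eventually_at_filter)
  then show ?thesis
    by (subst tendsto_cong[OF \<open>eventually _ _\<close>]) (simp add: True)
next
  case False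
  define G where "G z = (1 - exp (- \<i> * complex_of_real u * z)) / (\<i> * complex_of_real u)" for z
  have "DERIV G (complex_of_real t) :> cis (- (u * t))"
    using False unfolding G_def by (auto intro!: derivative_eq_intros simp: cis_conv_exp mult.assoc)
  then have "((\<lambda>k. (G (complex_of_real t + k) - G (complex_of_real t)) / k) \<longlongrightarrow> cis (- (u * t))) (at 0)"
    by (simp add: DERIV_def)
  moreover have "filterlim complex_of_real (at 0) (at (0::real))"
    unfolding filterlim_at by (auto intro!: tendsto_eq_intros simp: eventually_at_filter)
  ultimately have "((\<lambda>h. (G (complex_of_real t + complex_of_real h) - G (complex_of_real t)) / complex_of_real h)
      \<longlongrightarrow> cis (- (u * t))) (at 0)"
    by (rule filterlim_compose[where f = complex_of_real, unfolded o_def])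
  moreover have "G (complex_of_real t + complex_of_real h) - G (complex_of_real t) = ind0_hat (t + h) u - ind0_hat t u" for h
    using False unfolding G_def ind0_hat_def by (simp add: cis_conv_exp algebra_simps)
  ultimately show ?thesis by simp
qed

lemma borel_measurable_ind0_hat: "ind0_hat t \<in> borel_measurable borel"
proof -
  have "(\<lambda>u. cis (- (u * t))) \<in> borel_measurable borel"
    by (intro borel_measurable_continuous_onI continuous_intros)
  moreover have "(\<lambda>u. \<i> * complex_of_real u) \<in> borel_measurable borel"
    by (intro borel_measurable_continuous_onI continuous_intros)
  moreover have "{u \<in> space borel. u = (0::real)} \<in> sets borel"
    by (simp add: borel_closed)
  ultimately show ?thesis
    unfolding ind0_hat_def[abs_def] by measurable
qed

section \<open>Hermite coefficients of \<open>T\<^sub>m 1\<^sub>[\<^sub>0\<^sub>,\<^sub>t\<^sub>]\<close>\<close>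

lemma continuous_on_fourier_hermite_fun: "continuous_on UNIV (\<lambda>u. fourier (hermite_fun k) u)"
proof -
  have "continuous_on UNIV (hermite_fun k)"
    using gauss_dominated_hermite_fun[of k] by (simp add: gauss_dominated_def)
  then show ?thesis
    unfolding fourier_hermite_fun by (intro continuous_intros)
qed

definition Tm_kernel :: "(real \<Rightarrow> real) \<Rightarrow> nat \<Rightarrow> real \<Rightarrow> complex" where
  "Tm_kernel m k u = complex_of_real (sqrt (m u)) * cnj (fourier (hermite_fun k) u)"

definition Tm_majorant :: "(real \<Rightarrow> real) \<Rightarrow> nat \<Rightarrow> real \<Rightarrow> real" where
  "Tm_majorant m k u = (m u / (1 + u^2) + 2 * pi * ((1 + u^2) * (hermite_fun k u)^2)) / 2"

lemma Tm_coeff_eq_kernel_integral: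
  "Tm_coeff m f k = (1 / (2 * pi)) * (LINT u|lborel. Tm_kernel m k u * fourier f u)"
  unfolding Tm_coeff_def Tm_kernel_def by (simp add: mult_ac)

lemma norm_Tm_kernel_le:
  assumes "0 \<le> m u"
  shows "cmod (Tm_kernel m k u) \<le> Tm_majorant m k u"
proof -
  let ?y = "sqrt (2 * pi) * \<bar>hermite_fun k u\<bar>" and ?s = "1 + u^2"
  have s: "?s > 0" by (simp add: add_pos_nonneg)
  have "cmod (Tm_kernel m k u) = sqrt (m u) * ?y"
    using assms by (simp add: Tm_kernel_def fourier_hermite_fun norm_mult norm_power)
  also have "\<dots> \<le> (m u / ?s + ?s * ?y^2) / 2"
  proof -
    have "0 \<le> (sqrt (m u) - ?s * ?y)^2 / ?s" using s by simp
    also have "\<dots> = m u / ?s - 2 * (sqrt (m u) * ?y) + ?s * ?y^2"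
      using assms s by (simp add: power2_eq_square field_simps)
    finally show ?thesis by simp
  qed
  also have "\<dots> = Tm_majorant m k u"
    unfolding Tm_majorant_def by (simp add: power_mult_distrib)
  finally show ?thesis .
qed

definition Tm_deriv_coeff :: "(real \<Rightarrow> real) \<Rightarrow> real \<Rightarrow> nat \<Rightarrow> complex" where
  "Tm_deriv_coeff m t k = (1 / (2 * pi)) * (LINT u|lborel. Tm_kernel m k u * cis (- (u * t)))"

definition Tm_growth :: "(real \<Rightarrow> real) \<Rightarrow> real" where
  "Tm_growth m = (LINT u|lborel. m u / (1 + u^2)) / (4 * pi) + 1"

context
  fixes m :: "real \<Rightarrow> real"
  assumes m_measurable: "m \<in> borel_measurable lborel"
    and m_nonneg: "\<And>u. 0 \<le> m u"
    and m_integrable: "integrable lborel (\<lambda>u. m u / (1 + u^2))"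
begin

lemma integrable_Tm_majorant: "integrable lborel (Tm_majorant m k)"
  unfolding Tm_majorant_def[abs_def]
  using m_integrable integrable_hermite_fun_sq_weighted[of k] by auto

lemma borel_measurable_Tm_kernel: "Tm_kernel m k \<in> borel_measurable lborel"
proof -
  have "(\<lambda>u. sqrt (m u)) \<in> borel_measurable lborel"
    using m_measurable by measurable
  moreover have "(\<lambda>u. cnj (fourier (hermite_fun k) u)) \<in> borel_measurable borel"
    by (intro borel_measurable_continuous_onI continuous_intros continuous_on_fourier_hermite_fun)
  ultimately show ?thesis
    unfolding Tm_kernel_def[abs_def] by measurable
qed

lemma norm_Tm_kernel_mult_le:
  assumes "\<And>u. cmod (g u) \<le> B"
  shows "cmod (Tm_kernel m k u * g u) \<le> B * Tm_majorant m k u"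
proof -
  have K: "cmod (Tm_kernel m k u) \<le> Tm_majorant m k u"
    by (rule norm_Tm_kernel_le[of m, OF m_nonneg])
  have "cmod (Tm_kernel m k u) * cmod (g u) \<le> Tm_majorant m k u * B"
    by (intro mult_mono K assms) (use K norm_ge_zero order_trans in blast)+
  then show ?thesis
    by (simp add: norm_mult mult.commute)
qed

lemma integrable_Tm_kernel_mult:
  assumes "g \<in> borel_measurable borel" "\<And>u. cmod (g u) \<le> B"
  shows "integrable lborel (\<lambda>u. Tm_kernel m k u * g u)"
proof (rule Bochner_Integration.integrable_bound)
  show "integrable lborel (\<lambda>u. B * Tm_majorant m k u)"
    using integrable_Tm_majorant by auto
  show "(\<lambda>u. Tm_kernel m k u * g u) \<in> borel_measurable lborel"
    using borel_measurable_Tm_kernel assms(1) by measurable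
  show "AE u in lborel. norm (Tm_kernel m k u * g u) \<le> norm (B * Tm_majorant m k u)"
    using norm_Tm_kernel_mult_le[of g, OF assms(2)] by (intro AE_I2) (smt (verit) real_norm_def)
qed

lemma norm_Tm_kernel_integral_le:
  assumes "g \<in> borel_measurable borel" "\<And>u. cmod (g u) \<le> B"
  shows "cmod ((1 / (2 * pi)) * (LINT u|lborel. Tm_kernel m k u * g u)) \<le> B * Tm_growth m * (real k + 1)"
proof -
  define I where "I = (LINT u|lborel. m u / (1 + u^2))"
  have B: "B \<ge> 0"
    using assms(2)[of 0] norm_ge_zero order_trans by blast
  have I: "I \<ge> 0"
    unfolding I_def using m_nonneg by (intro integral_nonneg_AE) (auto intro!: add_pos_nonneg)
  have "cmod (LINT u|lborel. Tm_kernel m k u * g u) \<le> (LINT u|lborel. cmod (Tm_kernel m k u * g u))"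
    by (rule integral_norm_bound)
  also have "\<dots> \<le> (LINT u|lborel. B * Tm_majorant m k u)"
  proof (rule integral_mono)
    show "integrable lborel (\<lambda>u. cmod (Tm_kernel m k u * g u))"
      using integrable_Tm_kernel_mult[OF assms] by simp
    show "integrable lborel (\<lambda>u. B * Tm_majorant m k u)"
      using integrable_Tm_majorant by auto
    show "cmod (Tm_kernel m k u * g u) \<le> B * Tm_majorant m k u" for u
      by (rule norm_Tm_kernel_mult_le[where g = g, OF assms(2)])
  qed
  also have "\<dots> = B * ((I + 2 * pi * (LINT u|lborel. (1 + u^2) * (hermite_fun k u)^2)) / 2)"
    unfolding Tm_majorant_def I_def using m_integrable integrable_hermite_fun_sq_weighted[of k] by simp
  also have "\<dots> \<le> B * ((I + 2 * pi * (2 * real k + 2)) / 2)"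
    using B integral_hermite_fun_sq_weighted_le[of k] by (intro mult_left_mono) auto
  also have "\<dots> = 2 * pi * (B * (I / (4 * pi) + (real k + 1)))"
    by (simp add: field_simps)
  also have "\<dots> \<le> 2 * pi * (B * (Tm_growth m * (real k + 1)))"
  proof -
    have "I / (4 * pi) + (real k + 1) \<le> (I / (4 * pi) + 1) * (real k + 1)"
      using I by (simp add: algebra_simps divide_right_mono)
    then show ?thesis
      using B unfolding Tm_growth_def I_def[symmetric] by (intro mult_left_mono) auto
  qed
  finally show ?thesis
    by (simp add: norm_mult norm_divide field_simps)
qed

lemma Tm_coeff_ind0: "Tm_coeff m (ind0 t) k = (1 / (2 * pi)) * (LINT u|lborel. Tm_kernel m k u * ind0_hat t u)"
  by (simp add: Tm_coeff_eq_kernel_integral fourier_ind0)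

lemma norm_Tm_coeff_ind0_le: "cmod (Tm_coeff m (ind0 t) k) \<le> \<bar>t\<bar> * Tm_growth m * (real k + 1)"
  unfolding Tm_coeff_ind0
  by (intro norm_Tm_kernel_integral_le borel_measurable_ind0_hat norm_ind0_hat_le)

lemma Tm_coeff_ind0_diff_quotient:
  "(Tm_coeff m (ind0 (t + h)) k - Tm_coeff m (ind0 t) k) / complex_of_real h
     = (1 / (2 * pi)) * (LINT u|lborel. Tm_kernel m k u * ((ind0_hat (t + h) u - ind0_hat t u) / complex_of_real h))"
proof -
  have integrable: "integrable lborel (\<lambda>u. Tm_kernel m k u * ind0_hat s u)" for s
    by (rule integrable_Tm_kernel_mult[OF borel_measurable_ind0_hat norm_ind0_hat_le])
  have "(LINT u|lborel. Tm_kernel m k u * ((ind0_hat (t + h) u - ind0_hat t u) / complex_of_real h))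
      = ((LINT u|lborel. Tm_kernel m k u * ind0_hat (t + h) u) - (LINT u|lborel. Tm_kernel m k u * ind0_hat t u))
        / complex_of_real h"
  proof -
    have "(LINT u|lborel. Tm_kernel m k u * ((ind0_hat (t + h) u - ind0_hat t u) / complex_of_real h))
        = (LINT u|lborel. (Tm_kernel m k u * ind0_hat (t + h) u - Tm_kernel m k u * ind0_hat t u) / complex_of_real h)"
      by (simp add: algebra_simps diff_divide_distrib)
    then show ?thesis
      using integrable by (simp add: Bochner_Integration.integral_diff)
  qed
  then show ?thesis
    unfolding Tm_coeff_ind0 by (simp only: right_diff_distrib[symmetric] times_divide_eq_right)
qed

lemma norm_Tm_coeff_ind0_diff_quotient_le:
  "cmod ((Tm_coeff m (ind0 (t + h)) k - Tm_coeff m (ind0 t) k) / complex_of_real h) \<le> Tm_growth m * (real k + 1)"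
  using norm_Tm_kernel_integral_le[where g = "\<lambda>u. (ind0_hat (t + h) u - ind0_hat t u) / complex_of_real h"
      and B = 1, OF _ norm_ind0_hat_diff_quotient_le] borel_measurable_ind0_hat
  unfolding Tm_coeff_ind0_diff_quotient by simp

lemma norm_Tm_deriv_coeff_le: "cmod (Tm_deriv_coeff m t k) \<le> Tm_growth m * (real k + 1)"
  using norm_Tm_kernel_integral_le[of "\<lambda>u. cis (- (u * t))" 1 k]
  unfolding Tm_deriv_coeff_def by (simp add: borel_measurable_continuous_onI continuous_intros)

text \<open>Dominated convergence, with majorant \<open>Tm_majorant\<close>.\<close>
lemma Tm_coeff_ind0_diff_quotient_tendsto:
  "((\<lambda>h. (Tm_coeff m (ind0 (t + h)) k - Tm_coeff m (ind0 t) k) / complex_of_real h) \<longlongrightarrow> Tm_deriv_coeff m t k) (at 0)"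
proof -
  let ?q = "\<lambda>h u. (ind0_hat (t + h) u - ind0_hat t u) / complex_of_real h"
  have "((\<lambda>h. LINT u|lborel. Tm_kernel m k u * ?q h u) \<longlongrightarrow> (LINT u|lborel. Tm_kernel m k u * cis (- (u * t)))) (at 0)"
    unfolding tendsto_at_iff_sequentially
  proof (intro allI impI)
    fix X :: "nat \<Rightarrow> real"
    assume X: "\<forall>i. X i \<in> UNIV - {0}" "X \<longlonglongrightarrow> 0"
    then have X_at_0: "filterlim X (at 0) sequentially"
      by (auto simp: filterlim_at eventually_sequentially)
    have "(\<lambda>i. ?q (X i) u) \<longlonglongrightarrow> cis (- (u * t))" for u
      by (rule filterlim_compose[OF ind0_hat_diff_quotient_tendsto X_at_0])
    then have pointwise: "(\<lambda>i. Tm_kernel m k u * ?q (X i) u) \<longlonglongrightarrow> Tm_kernel m k u * cis (- (u * t))" for u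
      by (intro tendsto_mult tendsto_const)
    show "((\<lambda>h. LINT u|lborel. Tm_kernel m k u * ?q h u) \<circ> X) \<longlonglongrightarrow> (LINT u|lborel. Tm_kernel m k u * cis (- (u * t)))"
      unfolding o_def
    proof (rule integral_dominated_convergence[where w = "Tm_majorant m k"])
      have "(\<lambda>u. cis (- (u * t))) \<in> borel_measurable borel"
        by (intro borel_measurable_continuous_onI continuous_intros)
      then show "(\<lambda>u. Tm_kernel m k u * cis (- (u * t))) \<in> borel_measurable lborel"
        using borel_measurable_Tm_kernel by measurable
      show "(\<lambda>u. Tm_kernel m k u * ?q (X i) u) \<in> borel_measurable lborel" for i
        using borel_measurable_Tm_kernel borel_measurable_ind0_hat by measurable
      show "AE u in lborel. norm (Tm_kernel m k u * ?q (X i) u) \<le> Tm_majorant m k u" for i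
        using norm_Tm_kernel_mult_le[where g = "?q (X i)" and B = 1, OF norm_ind0_hat_diff_quotient_le] by simp
      show "AE u in lborel. (\<lambda>i. Tm_kernel m k u * ?q (X i) u) \<longlonglongrightarrow> Tm_kernel m k u * cis (- (u * t))"
        using pointwise by simp
    qed (rule integrable_Tm_majorant)
  qed
  then show ?thesis
    unfolding Tm_coeff_ind0_diff_quotient Tm_deriv_coeff_def by (rule tendsto_mult_left)
qed

end

section \<open>Field operators on the Fock scale\<close>

lemma fock_weight_pos: "fock_weight p ks > 0"
  unfolding fock_weight_def by simp

lemma fock_weight_Cons: "fock_weight p (k # ks) = 2 powr (real_of_int p * real (Suc k)) * fock_weight p ks"
  unfolding fock_weight_def by (simp add: powr_add[symmetric] algebra_simps)

lemma fock_weight_1_Cons: "fock_weight 1 (k # ks) = 2 ^ Suc k * fock_weight 1 ks"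
proof -
  have "2 powr (real_of_int 1 * real (Suc k)) = (2::real) ^ Suc k"
    using powr_realpow[of 2 "Suc k"] by simp
  then show ?thesis
    by (simp only: fock_weight_Cons)
qed

lemma fock_weight_neg1_Cons: "fock_weight (-1) (k # ks) = (1 / 2) ^ Suc k * fock_weight (-1) ks"
proof -
  have "real_of_int (-1) * real (Suc k) = - real (Suc k)"
    by simp
  then have "2 powr (real_of_int (-1) * real (Suc k)) = 1 / 2 powr real (Suc k)"
    by (simp only: powr_minus_divide)
  also have "\<dots> = (1 / 2) ^ Suc k"
    using powr_realpow[of 2 "Suc k"] by (simp add: power_one_over)
  finally show ?thesis
    by (simp only: fock_weight_Cons)
qed

lemma fock_weight_neg1_le_1: "fock_weight (-1) ks \<le> fock_weight 1 ks"
  unfolding fock_weight_def by (intro powr_mono) auto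

lemma fock_weight_1_ge_1: "fock_weight 1 ks \<ge> 1"
  unfolding fock_weight_def by (simp add: ge_one_powr_ge_zero)

definition fock_sqnorm :: "int \<Rightarrow> fock \<Rightarrow> real" where
  "fock_sqnorm p F = (\<Sum>\<^sub>\<infinity>ks. (cmod (F ks))^2 * fock_weight p ks)"

lemma fock_norm_eq_sqrt: "fock_norm p F = sqrt (fock_sqnorm p F)"
  unfolding fock_norm_def fock_sqnorm_def ..

lemma fock_sqnorm_nonneg: "fock_sqnorm p F \<ge> 0"
  unfolding fock_sqnorm_def by (intro infsum_nonneg) (simp add: fock_weight_pos less_imp_le)

lemma sum_le_fock_sqnorm:
  "fock_in p F \<Longrightarrow> finite A \<Longrightarrow> (\<Sum>ks\<in>A. (cmod (F ks))^2 * fock_weight p ks) \<le> fock_sqnorm p F"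
  unfolding fock_sqnorm_def fock_in_def
  by (rule finite_sum_le_infsum) (auto simp: fock_weight_pos less_imp_le)

lemma fock_in_iff_finite_sums_bounded:
  "fock_in p F \<and> fock_sqnorm p F \<le> B \<longleftrightarrow> (\<forall>A. finite A \<longrightarrow> (\<Sum>ks\<in>A. (cmod (F ks))^2 * fock_weight p ks) \<le> B)"
proof
  assume "\<forall>A. finite A \<longrightarrow> (\<Sum>ks\<in>A. (cmod (F ks))^2 * fock_weight p ks) \<le> B"
  moreover have "0 \<le> (cmod (F ks))^2 * fock_weight p ks" for ks
    by (simp add: fock_weight_pos less_imp_le)
  ultimately have "(\<lambda>ks. (cmod (F ks))^2 * fock_weight p ks) summable_on UNIV"
    by (intro nonneg_bdd_above_summable_on bdd_aboveI) auto
  then show "fock_in p F \<and> fock_sqnorm p F \<le> B"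
    unfolding fock_in_def fock_sqnorm_def
    using \<open>\<forall>A. _\<close> by (auto intro: infsum_le_finite_sums)
qed (use sum_le_fock_sqnorm order_trans in blast)

lemma summable_first_slot_weighted:
  assumes "fock_in 1 F"
  shows "summable (\<lambda>k. (cmod (F (k # ks)))^2 * fock_weight 1 (k # ks))"
proof -
  have "(\<lambda>ks. (cmod (F ks))^2 * fock_weight 1 ks) summable_on range (\<lambda>k. k # ks)"
    using assms unfolding fock_in_def by (rule summable_on_subset_banach) auto
  then have "(\<lambda>k. (cmod (F (k # ks)))^2 * fock_weight 1 (k # ks)) summable_on UNIV"
    by (subst (asm) summable_on_reindex) (auto intro: inj_onI simp: o_def)
  then show ?thesis
    by (subst (asm) summable_on_UNIV_nonneg_real_iff) (auto simp: fock_weight_pos less_imp_le)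
qed

definition first_slot_sqnorm :: "fock \<Rightarrow> nat list \<Rightarrow> real" where
  "first_slot_sqnorm F ks = (\<Sum>k. (cmod (F (k # ks)))^2 * 2 ^ Suc k)"

lemma summable_first_slot:
  assumes "fock_in 1 F"
  shows "summable (\<lambda>k. (cmod (F (k # ks)))^2 * 2 ^ Suc k)"
proof (rule summable_comparison_test[OF _ summable_first_slot_weighted[OF assms, of ks]], intro exI allI impI)
  fix k :: nat
  have "(2::real) ^ Suc k \<le> fock_weight 1 (k # ks)"
    using fock_weight_1_ge_1[of ks] by (simp add: fock_weight_1_Cons)
  then show "norm ((cmod (F (k # ks)))^2 * 2 ^ Suc k) \<le> (cmod (F (k # ks)))^2 * fock_weight 1 (k # ks)"
    by (simp add: mult_left_mono)
qed

lemma sum_first_slot_sqnorm_le: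
  assumes "fock_in 1 F" "finite A"
  shows "(\<Sum>ks\<in>A. first_slot_sqnorm F ks * fock_weight (-1) ks) \<le> fock_sqnorm 1 F"
proof -
  let ?y = "\<lambda>k ks. (cmod (F (k # ks)))^2 * fock_weight 1 (k # ks)"
  have "first_slot_sqnorm F ks * fock_weight (-1) ks \<le> (\<Sum>k. ?y k ks)" for ks
  proof -
    have "first_slot_sqnorm F ks * fock_weight (-1) ks = (\<Sum>k. (cmod (F (k # ks)))^2 * 2 ^ Suc k * fock_weight (-1) ks)"
      unfolding first_slot_sqnorm_def by (rule suminf_mult2[OF summable_first_slot[OF assms(1)]])
    also have "\<dots> \<le> (\<Sum>k. ?y k ks)"
    proof (rule suminf_le)
      show "(cmod (F (k # ks)))^2 * 2 ^ Suc k * fock_weight (-1) ks \<le> ?y k ks" for k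
        unfolding fock_weight_1_Cons mult.assoc
        by (intro mult_left_mono fock_weight_neg1_le_1) auto
    qed (intro summable_mult2 summable_first_slot summable_first_slot_weighted assms(1))+
    finally show ?thesis .
  qed
  then have "(\<Sum>ks\<in>A. first_slot_sqnorm F ks * fock_weight (-1) ks) \<le> (\<Sum>ks\<in>A. \<Sum>k. ?y k ks)"
    by (rule sum_mono)
  also have "\<dots> = (\<Sum>k. \<Sum>ks\<in>A. ?y k ks)"
    by (rule suminf_sum[symmetric]) (rule summable_first_slot_weighted[OF assms(1)])
  also have "\<dots> \<le> fock_sqnorm 1 F"
  proof (rule suminf_le_const)
    show "summable (\<lambda>k. \<Sum>ks\<in>A. ?y k ks)"
      by (intro summable_sum summable_first_slot_weighted assms(1))
    fix n
    have "(\<Sum>k<n. \<Sum>ks\<in>A. ?y k ks) = (\<Sum>(k, ks)\<in>{..<n} \<times> A. ?y k ks)"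
      by (simp add: sum.cartesian_product)
    also have "\<dots> = (\<Sum>ks'\<in>(\<lambda>(k, ks). k # ks) ` ({..<n} \<times> A). (cmod (F ks'))^2 * fock_weight 1 ks')"
      by (subst sum.reindex) (auto intro: inj_onI simp: case_prod_beta)
    also have "\<dots> \<le> fock_sqnorm 1 F"
      using assms by (intro sum_le_fock_sqnorm) auto
    finally show "(\<Sum>k<n. \<Sum>ks\<in>A. ?y k ks) \<le> fock_sqnorm 1 F" .
  qed
  finally show ?thesis .
qed

text \<open>Squared norm of a coefficient sequence in \<open>K\<^sub>-\<^sub>1\<close>.\<close>
definition Km1_sqnorm :: "(nat \<Rightarrow> complex) \<Rightarrow> real" where
  "Km1_sqnorm a = (\<Sum>k. (cmod (a k))^2 * (1 / 2) ^ Suc k)"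

definition Km1_summable :: "(nat \<Rightarrow> complex) \<Rightarrow> bool" where
  "Km1_summable a \<longleftrightarrow> summable (\<lambda>k. (cmod (a k))^2 * (1 / 2) ^ Suc k)"

lemma Km1_sqnorm_nonneg: "Km1_summable a \<Longrightarrow> Km1_sqnorm a \<ge> 0"
  unfolding Km1_sqnorm_def Km1_summable_def by (intro suminf_nonneg) simp_all

lemma summable_poly2_half_power: "summable (\<lambda>k::nat. (real k + 1)^2 * (1 / 2) ^ Suc k)"
proof -
  have "summable (\<lambda>k::nat. (real k + 1)^2 * (1 / 2) ^ (k + 1))"
    by (rule summable_comparison_test_bigo[where g = "\<lambda>k. (3 / 4::real) ^ k"])
      (simp add: summable_geometric, real_asymp)
  then show ?thesis by simp
qed

lemma Km1_summable_linear_bound: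
  assumes "\<And>k. cmod (a k) \<le> C * (real k + 1)"
  shows "Km1_summable a"
  unfolding Km1_summable_def
proof (rule summable_comparison_test[OF _ summable_mult[OF summable_poly2_half_power, of "C^2"]], intro exI allI impI)
  fix k :: nat
  have "(cmod (a k))^2 \<le> (C * (real k + 1))^2"
    by (intro power_mono assms) simp
  then show "norm ((cmod (a k))^2 * (1 / 2) ^ Suc k) \<le> C^2 * ((real k + 1)^2 * (1 / 2) ^ Suc k)"
    by (simp add: power_mult_distrib mult_right_mono del: power_Suc)
qed

lemma first_slot_Cauchy_Schwarz:
  assumes "Km1_summable a" "fock_in 1 F"
  shows "(\<Sum>k<n. cmod (a k) * cmod (F (k # ks))) \<le> sqrt (Km1_sqnorm a) * sqrt (first_slot_sqnorm F ks)"
proof -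
  define f where "f k = cmod (a k) * sqrt ((1 / 2) ^ Suc k)" for k
  define g where "g k = cmod (F (k # ks)) * sqrt (2 ^ Suc k)" for k
  have "\<bar>f k\<bar> * \<bar>g k\<bar> = cmod (a k) * cmod (F (k # ks))" for k
  proof -
    have "sqrt ((1 / 2::real) ^ Suc k) * sqrt (2 ^ Suc k) = 1"
      by (simp add: real_sqrt_mult[symmetric] power_mult_distrib[symmetric])
    then show ?thesis
      unfolding f_def g_def by (simp add: abs_mult algebra_simps)
  qed
  then have "(\<Sum>k<n. cmod (a k) * cmod (F (k # ks))) = (\<Sum>k<n. \<bar>f k\<bar> * \<bar>g k\<bar>)"
    by simp
  also have "\<dots> \<le> L2_set f {..<n} * L2_set g {..<n}"
    by (rule L2_set_mult_ineq)
  also have "\<dots> \<le> sqrt (Km1_sqnorm a) * sqrt (first_slot_sqnorm F ks)"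
  proof (intro mult_mono)
    have "(\<Sum>k<n. (f k)^2) \<le> Km1_sqnorm a"
      unfolding f_def Km1_sqnorm_def using assms(1) unfolding Km1_summable_def
      by (simp add: power_mult_distrib sum_le_suminf)
    then show "L2_set f {..<n} \<le> sqrt (Km1_sqnorm a)"
      unfolding L2_set_def by simp
    have "(\<Sum>k<n. (g k)^2) \<le> first_slot_sqnorm F ks"
      unfolding g_def first_slot_sqnorm_def using summable_first_slot[OF assms(2)]
      by (simp add: power_mult_distrib sum_le_suminf)
    then show "L2_set g {..<n} \<le> sqrt (first_slot_sqnorm F ks)"
      unfolding L2_set_def by simp
  qed (auto simp: L2_set_def Km1_sqnorm_nonneg[OF assms(1)] intro: sum_nonneg)
  finally show ?thesis .
qed

lemma summable_norm_annihilation_terms: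
  assumes "Km1_summable a" "fock_in 1 F"
  shows "summable (\<lambda>k. cmod (cnj (a k) * F (k # ks)))"
  by (rule summableI_nonneg_bounded[where x = "sqrt (Km1_sqnorm a) * sqrt (first_slot_sqnorm F ks)"])
    (use first_slot_Cauchy_Schwarz[OF assms] in \<open>auto simp: norm_mult\<close>)

lemma summable_annihilation_terms:
  "Km1_summable a \<Longrightarrow> fock_in 1 F \<Longrightarrow> summable (\<lambda>k. cnj (a k) * F (k # ks))"
  by (rule summable_norm_cancel[OF summable_norm_annihilation_terms])

lemma norm_annihilation_sq_le:
  assumes "Km1_summable a" "fock_in 1 F"
  shows "(cmod (annihilation a F ks))^2 \<le> Km1_sqnorm a * first_slot_sqnorm F ks"
proof -
  have "cmod (annihilation a F ks) \<le> (\<Sum>k. cmod (cnj (a k) * F (k # ks)))"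
    unfolding annihilation_def by (rule summable_norm[OF summable_norm_annihilation_terms[OF assms]])
  also have "\<dots> \<le> sqrt (Km1_sqnorm a) * sqrt (first_slot_sqnorm F ks)"
    by (rule suminf_le_const[OF summable_norm_annihilation_terms[OF assms]])
      (use first_slot_Cauchy_Schwarz[OF assms] in \<open>auto simp: norm_mult\<close>)
  finally have "(cmod (annihilation a F ks))^2 \<le> (sqrt (Km1_sqnorm a) * sqrt (first_slot_sqnorm F ks))^2"
    by (intro power_mono) auto
  also have "\<dots> = Km1_sqnorm a * first_slot_sqnorm F ks"
    using Km1_sqnorm_nonneg[OF assms(1)] summable_first_slot[OF assms(2)]
    by (simp add: power_mult_distrib first_slot_sqnorm_def suminf_nonneg)
  finally show ?thesis .
qed

lemma sum_annihilation_sq_le: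
  assumes "Km1_summable a" "fock_in 1 F" "finite A"
  shows "(\<Sum>ks\<in>A. (cmod (annihilation a F ks))^2 * fock_weight (-1) ks) \<le> Km1_sqnorm a * fock_sqnorm 1 F"
proof -
  have "(\<Sum>ks\<in>A. (cmod (annihilation a F ks))^2 * fock_weight (-1) ks)
      \<le> (\<Sum>ks\<in>A. Km1_sqnorm a * (first_slot_sqnorm F ks * fock_weight (-1) ks))"
    using norm_annihilation_sq_le[OF assms(1,2)] fock_weight_pos
    by (intro sum_mono) (auto simp: mult.assoc intro: mult_right_mono less_imp_le)
  also have "\<dots> \<le> Km1_sqnorm a * fock_sqnorm 1 F"
    unfolding sum_distrib_left[symmetric]
    by (intro mult_left_mono sum_first_slot_sqnorm_le Km1_sqnorm_nonneg assms)
  finally show ?thesis .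
qed

lemma sum_creation_sq_le:
  assumes "Km1_summable a" "fock_in 1 F" "finite A"
  shows "(\<Sum>ks\<in>A. (cmod (creation a F ks))^2 * fock_weight (-1) ks) \<le> Km1_sqnorm a * fock_sqnorm 1 F"
proof -
  let ?x = "\<lambda>k. (cmod (a k))^2 * (1 / 2) ^ Suc k"
  let ?y = "\<lambda>r. (cmod (F r))^2 * fock_weight 1 r"
  define A' where "A' = A - {[]}"
  have A': "finite A'" "[] \<notin> A'"
    using assms(3) unfolding A'_def by auto
  have "(\<Sum>ks\<in>A. (cmod (creation a F ks))^2 * fock_weight (-1) ks)
      = (\<Sum>ks\<in>A'. (cmod (creation a F ks))^2 * fock_weight (-1) ks)"
    unfolding A'_def using assms(3) by (intro sum.mono_neutral_right) (auto simp: creation_def)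
  also have "\<dots> \<le> (\<Sum>ks\<in>A'. ?x (hd ks) * ?y (tl ks))"
  proof (intro sum_mono)
    fix ks
    assume "ks \<in> A'"
    then obtain k r where ks: "ks = k # r"
      using A'(2) by (cases ks) auto
    have "(cmod (creation a F ks))^2 * fock_weight (-1) ks = ?x k * ((cmod (F r))^2 * fock_weight (-1) r)"
      unfolding ks creation_def fock_weight_neg1_Cons
      by (simp add: norm_mult power_mult_distrib del: power_Suc)
    also have "\<dots> \<le> ?x k * ?y r"
      by (intro mult_left_mono fock_weight_neg1_le_1) auto
    finally show "(cmod (creation a F ks))^2 * fock_weight (-1) ks \<le> ?x (hd ks) * ?y (tl ks)"
      by (simp add: ks)
  qed
  also have "\<dots> = (\<Sum>p\<in>(\<lambda>ks. (hd ks, tl ks)) ` A'. ?x (fst p) * ?y (snd p))"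
  proof (subst sum.reindex)
    show "inj_on (\<lambda>ks. (hd ks, tl ks)) A'"
      using A'(2) by (intro inj_onI) (metis list.collapse prod.inject)
  qed (simp add: o_def)
  also have "\<dots> \<le> (\<Sum>p\<in>hd ` A' \<times> tl ` A'. ?x (fst p) * ?y (snd p))"
    by (intro sum_mono2) (auto simp: A' fock_weight_pos less_imp_le)
  also have "\<dots> = (\<Sum>k\<in>hd ` A'. ?x k) * (\<Sum>r\<in>tl ` A'. ?y r)"
    by (simp add: sum_product sum.cartesian_product case_prod_beta)
  also have "\<dots> \<le> Km1_sqnorm a * fock_sqnorm 1 F"
  proof (intro mult_mono)
    show "(\<Sum>k\<in>hd ` A'. ?x k) \<le> Km1_sqnorm a"
      unfolding Km1_sqnorm_def using assms(1) unfolding Km1_summable_def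
      by (intro sum_le_suminf) (auto simp: A')
    show "(\<Sum>r\<in>tl ` A'. ?y r) \<le> fock_sqnorm 1 F"
      by (rule sum_le_fock_sqnorm[OF assms(2)]) (simp add: A')
  qed (auto simp: Km1_sqnorm_nonneg[OF assms(1)] fock_weight_pos less_imp_le intro!: sum_nonneg)
  finally show ?thesis .
qed

definition field_operator :: "(nat \<Rightarrow> complex) \<Rightarrow> fock \<Rightarrow> fock" where
  "field_operator a F = (\<lambda>ks. creation a F ks + annihilation a F ks)"

theorem field_operator_bounded:
  assumes "Km1_summable a" "fock_in 1 F"
  shows "fock_in (-1) (field_operator a F)"
    and "fock_sqnorm (-1) (field_operator a F) \<le> 4 * Km1_sqnorm a * fock_sqnorm 1 F"
proof -
  have "(\<Sum>ks\<in>A. (cmod (field_operator a F ks))^2 * fock_weight (-1) ks) \<le> 4 * Km1_sqnorm a * fock_sqnorm 1 F"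
    if "finite A" for A
  proof -
    have "(cmod (x + y))^2 \<le> 2 * (cmod x)^2 + 2 * (cmod y)^2" for x y :: complex
      using norm_triangle_ineq[of x y] sum_squares_bound[of "cmod x" "cmod y"]
      by (smt (verit) norm_ge_zero power_mono power2_sum)
    then have "(\<Sum>ks\<in>A. (cmod (field_operator a F ks))^2 * fock_weight (-1) ks)
        \<le> (\<Sum>ks\<in>A. 2 * ((cmod (creation a F ks))^2 * fock_weight (-1) ks)
                     + 2 * ((cmod (annihilation a F ks))^2 * fock_weight (-1) ks))"
      unfolding field_operator_def using fock_weight_pos
      by (intro sum_mono) (smt (verit, best) distrib_right mult.assoc mult_right_mono)
    also have "\<dots> \<le> 4 * Km1_sqnorm a * fock_sqnorm 1 F"
      using sum_creation_sq_le[OF assms that] sum_annihilation_sq_le[OF assms that]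
      by (simp add: sum.distrib flip: sum_distrib_left)
    finally show ?thesis .
  qed
  then show "fock_in (-1) (field_operator a F)" "fock_sqnorm (-1) (field_operator a F) \<le> 4 * Km1_sqnorm a * fock_sqnorm 1 F"
    using fock_in_iff_finite_sums_bounded by blast+
qed

text \<open>Dominated convergence for the counting measure, with majorant \<open>C\<^sup>2 (k + 1)\<^sup>2 2\<^sup>-\<^sup>k\<^sup>-\<^sup>1\<close>.\<close>
lemma Km1_sqnorm_tendsto_0:
  fixes a :: "real \<Rightarrow> nat \<Rightarrow> complex"
  assumes bound: "\<And>h k. cmod (a h k) \<le> C * (real k + 1)"
    and lim: "\<And>k. ((\<lambda>h. a h k) \<longlongrightarrow> 0) (at 0)"
  shows "((\<lambda>h. Km1_sqnorm (a h)) \<longlongrightarrow> 0) (at 0)"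
  unfolding tendsto_at_iff_sequentially
proof (intro allI impI)
  fix X :: "nat \<Rightarrow> real"
  assume "\<forall>i. X i \<in> UNIV - {0}" "X \<longlonglongrightarrow> 0"
  then have X_at_0: "filterlim X (at 0) sequentially"
    by (auto simp: filterlim_at eventually_sequentially)
  define w where "w k = C^2 * ((real k + 1)^2 * (1 / 2::real) ^ Suc k)" for k :: nat
  define s where "s i k = (cmod (a (X i) k))^2 * (1 / 2::real) ^ Suc k" for i k
  have w: "integrable (count_space UNIV) w"
    unfolding integrable_count_space_nat_iff w_def
    using summable_mult[OF summable_poly2_half_power, of "C^2"] by simp
  have s_le: "norm (s i k) \<le> w k" for i k
  proof -
    have "(cmod (a (X i) k))^2 \<le> (C * (real k + 1))^2"
      by (intro power_mono bound) simp
    then show ?thesis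
      unfolding s_def w_def by (simp add: power_mult_distrib mult_right_mono del: power_Suc)
  qed
  have s_lim: "(\<lambda>i. s i k) \<longlonglongrightarrow> 0" for k
  proof -
    have "(\<lambda>i. a (X i) k) \<longlonglongrightarrow> 0"
      by (rule filterlim_compose[OF lim X_at_0])
    then have "(\<lambda>i. (cmod (a (X i) k))^2 * (1 / 2) ^ Suc k) \<longlonglongrightarrow> (cmod 0)^2 * (1 / 2) ^ Suc k"
      by (intro tendsto_intros)
    then show ?thesis
      unfolding s_def by simp
  qed
  have "(\<lambda>i. integral\<^sup>L (count_space UNIV) (s i)) \<longlonglongrightarrow> integral\<^sup>L (count_space UNIV) (\<lambda>k::nat. 0::real)"
    by (rule integral_dominated_convergence[where w = w]) (use w s_le s_lim in auto)
  moreover have "integral\<^sup>L (count_space UNIV) (s i) = Km1_sqnorm (a (X i))" for i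
  proof -
    have "integrable (count_space UNIV) (s i)"
      by (rule integrable_dominated_convergence2[where w = w and f = "\<lambda>k. 0::real"]) (use w s_le s_lim in auto)
    then show ?thesis
      unfolding Km1_sqnorm_def s_def by (rule integral_count_space_nat)
  qed
  ultimately show "((\<lambda>h. Km1_sqnorm (a h)) \<circ> X) \<longlonglongrightarrow> 0"
    by (simp add: o_def)
qed

lemma field_operator_add:
  assumes "Km1_summable a" "fock_in 1 F" "fock_in 1 H"
  shows "field_operator a (\<lambda>ks. F ks + H ks) = (\<lambda>ks. field_operator a F ks + field_operator a H ks)"
  unfolding field_operator_def annihilation_def fun_eq_iff
  using suminf_add[OF summable_annihilation_terms[OF assms(1,2)] summable_annihilation_terms[OF assms(1,3)]]
  by (auto simp: creation_def algebra_simps split: list.split)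

lemma field_operator_mult:
  assumes "Km1_summable a" "fock_in 1 F"
  shows "field_operator a (\<lambda>ks. c * F ks) = (\<lambda>ks. c * field_operator a F ks)"
  unfolding field_operator_def annihilation_def fun_eq_iff
  using suminf_mult[OF summable_annihilation_terms[OF assms], of c]
  by (auto simp: creation_def algebra_simps split: list.split)

lemma field_operator_diff_quotient:
  assumes "Km1_summable a" "Km1_summable b" "fock_in 1 F"
  shows "(\<lambda>ks. (field_operator a F ks - field_operator b F ks) / complex_of_real h)
       = field_operator (\<lambda>k. (a k - b k) / complex_of_real h) F"
proof
  fix ks
  have "annihilation (\<lambda>k. (a k - b k) / complex_of_real h) F ks
      = (\<Sum>k. (cnj (a k) * F (k # ks) - cnj (b k) * F (k # ks)) / complex_of_real h)"
    unfolding annihilation_def by (simp add: algebra_simps diff_divide_distrib)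
  also have "\<dots> = (annihilation a F ks - annihilation b F ks) / complex_of_real h"
    unfolding annihilation_def
    using assms by (simp add: suminf_divide suminf_diff summable_diff summable_annihilation_terms)
  finally have annihilation: "annihilation (\<lambda>k. (a k - b k) / complex_of_real h) F ks
      = (annihilation a F ks - annihilation b F ks) / complex_of_real h" .
  have creation: "creation (\<lambda>k. (a k - b k) / complex_of_real h) F ks
      = (creation a F ks - creation b F ks) / complex_of_real h"
    by (simp add: creation_def algebra_simps diff_divide_distrib split: list.split)
  show "(field_operator a F ks - field_operator b F ks) / complex_of_real h
      = field_operator (\<lambda>k. (a k - b k) / complex_of_real h) F ks"
    unfolding field_operator_def creation annihilation by (simp add: add_divide_distrib diff_divide_distrib)
qed

lemma field_operator_diff:
  assumes "Km1_summable a" "Km1_summable b" "fock_in 1 F"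
  shows "(\<lambda>ks. field_operator a F ks - field_operator b F ks) = field_operator (\<lambda>k. a k - b k) F"
  using field_operator_diff_quotient[OF assms, of 1] by simp

lemma G1_imp_fock_in_1: "F \<in> G1 \<Longrightarrow> fock_in 1 F"
  unfolding G1_def by (metis (mono_tags) mem_Collect_eq of_nat_1)

lemma fock_in_neg1_imp_Gm1: "fock_in (-1) F \<Longrightarrow> F \<in> Gm1"
  unfolding Gm1_def by (metis (mono_tags) mem_Collect_eq of_nat_1)

lemma Gm1_seminorm_field_operator_le:
  assumes "Gm1_seminorm q"
  obtains C where "\<And>a F. Km1_summable a \<Longrightarrow> fock_in 1 F \<Longrightarrow>
    0 \<le> q (field_operator a F) \<and> q (field_operator a F) \<le> C * sqrt (Km1_sqnorm a) * fock_norm 1 F"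
proof -
  obtain C where C: "\<And>x. fock_in (- int 1) x \<Longrightarrow> q x \<le> C * fock_norm (- int 1) x"
    using assms unfolding Gm1_seminorm_def by blast
  have "0 \<le> q (field_operator a F) \<and> q (field_operator a F) \<le> 2 * max C 0 * sqrt (Km1_sqnorm a) * fock_norm 1 F"
    if a: "Km1_summable a" and F: "fock_in 1 F" for a F
  proof
    have in_m1: "fock_in (-1) (field_operator a F)"
      by (rule field_operator_bounded(1)[OF that])
    then show "0 \<le> q (field_operator a F)"
      using assms fock_in_neg1_imp_Gm1 unfolding Gm1_seminorm_def by blast
    have "q (field_operator a F) \<le> max C 0 * sqrt (fock_sqnorm (-1) (field_operator a F))"
      using C[of "field_operator a F"] in_m1 fock_sqnorm_nonneg
      by (simp add: fock_norm_eq_sqrt) (smt (verit) mult_right_mono real_sqrt_ge_zero)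
    also have "\<dots> \<le> max C 0 * sqrt (4 * Km1_sqnorm a * fock_sqnorm 1 F)"
      by (intro mult_left_mono real_sqrt_le_mono field_operator_bounded(2)[OF that]) auto
    also have "\<dots> = 2 * max C 0 * sqrt (Km1_sqnorm a) * fock_norm 1 F"
      by (simp add: fock_norm_eq_sqrt real_sqrt_mult)
    finally show "q (field_operator a F) \<le> 2 * max C 0 * sqrt (Km1_sqnorm a) * fock_norm 1 F" .
  qed
  then show thesis
    by (rule that)
qed

theorem cont_lin_G_field_operator:
  assumes a: "Km1_summable a"
  shows "cont_lin_G (field_operator a)"
  unfolding cont_lin_G_def
proof (intro conjI ballI allI impI)
  fix F H c
  assume F: "F \<in> G1" and H: "H \<in> G1"
  show "field_operator a F \<in> Gm1"
    using field_operator_bounded(1)[OF a G1_imp_fock_in_1[OF F]] by (rule fock_in_neg1_imp_Gm1)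
  show "field_operator a (\<lambda>ks. F ks + H ks) = (\<lambda>ks. field_operator a F ks + field_operator a H ks)"
    using a F H by (intro field_operator_add G1_imp_fock_in_1)
  show "field_operator a (\<lambda>ks. c * F ks) = (\<lambda>ks. c * field_operator a F ks)"
    using a F by (intro field_operator_mult G1_imp_fock_in_1)
next
  fix q
  assume "Gm1_seminorm q"
  then obtain C where "\<And>F. fock_in 1 F \<Longrightarrow> q (field_operator a F) \<le> C * sqrt (Km1_sqnorm a) * fock_norm 1 F"
    using a by (metis Gm1_seminorm_field_operator_le)
  then show "\<exists>p::nat. \<exists>C. \<forall>F\<in>G1. q (field_operator a F) \<le> C * fock_norm (int p) F"
    by (metis G1_imp_fock_in_1 of_nat_1)
qed

text \<open>The proof gives convergence in operator norm \<open>\<Gamma>(K\<^sub>1) \<rightarrow> \<Gamma>(K\<^sub>-\<^sub>1)\<close>, which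
  implies convergence in \<open>G\<^sub>-\<^sub>1\<close>.\<close>
theorem Gm1_tendsto_field_operator:
  fixes a :: "real \<Rightarrow> nat \<Rightarrow> complex"
  assumes bound: "\<And>h k. cmod (a h k) \<le> C * (real k + 1)" "\<And>k. cmod (b k) \<le> C * (real k + 1)"
    and lim: "\<And>k. ((\<lambda>h. a h k) \<longlongrightarrow> b k) (at 0)"
    and F: "F \<in> G1"
  shows "Gm1_tendsto (\<lambda>h. field_operator (a h) F) (field_operator b F) (at 0)"
  unfolding Gm1_tendsto_def
proof (intro conjI allI impI)
  have F1: "fock_in 1 F"
    using F by (rule G1_imp_fock_in_1)
  have a: "Km1_summable (a h)" for h
    using bound(1) by (rule Km1_summable_linear_bound)
  have b: "Km1_summable b"
    using bound(2) by (rule Km1_summable_linear_bound)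
  show "field_operator b F \<in> Gm1"
    using field_operator_bounded(1)[OF b F1] by (rule fock_in_neg1_imp_Gm1)
  show "\<forall>\<^sub>F h in at 0. field_operator (a h) F \<in> Gm1"
    using field_operator_bounded(1)[OF a F1] fock_in_neg1_imp_Gm1 by simp
  fix q
  assume "Gm1_seminorm q"
  then obtain D where D: "\<And>c. Km1_summable c \<Longrightarrow>
      0 \<le> q (field_operator c F) \<and> q (field_operator c F) \<le> D * sqrt (Km1_sqnorm c) * fock_norm 1 F"
    using F1 by (metis Gm1_seminorm_field_operator_le)
  define d where "d h k = a h k - b k" for h k
  have d_bound: "cmod (d h k) \<le> (C + C) * (real k + 1)" for h k
    using norm_triangle_ineq4[of "a h k" "b k"] bound(1)[of h k] bound(2)[of k] by (simp add: d_def algebra_simps)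
  have "((\<lambda>h. d h k) \<longlongrightarrow> 0) (at 0)" for k
    using tendsto_diff[OF lim[of k] tendsto_const[of "b k"]] by (simp add: d_def)
  then have "((\<lambda>h. Km1_sqnorm (d h)) \<longlongrightarrow> 0) (at 0)"
    using d_bound by (intro Km1_sqnorm_tendsto_0)
  then have "((\<lambda>h. D * sqrt (Km1_sqnorm (d h)) * fock_norm 1 F) \<longlongrightarrow> 0) (at 0)"
    by (auto intro!: tendsto_eq_intros)
  moreover have "q (\<lambda>ks. field_operator (a h) F ks - field_operator b F ks) = q (field_operator (d h) F)" for h
    unfolding d_def by (simp add: field_operator_diff a b F1)
  ultimately show "((\<lambda>h. q (\<lambda>ks. field_operator (a h) F ks - field_operator b F ks)) \<longlongrightarrow> 0) (at 0)"
    using D Km1_summable_linear_bound[OF d_bound]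
    by (auto intro: Lim_null_comparison[rotated])
qed

lemma Xm_eq_field_operator: "Xm m t = field_operator (Tm_coeff m (ind0 t))"
  unfolding Xm_def field_operator_def ..

theorem theorem8p2:
  fixes m :: "real \<Rightarrow> real" and b K C1 C2 :: real
  assumes meas: "m \<in> borel_measurable lborel"
    and pos: "\<And>u. 0 < m u"
    and int: "integrable lborel (\<lambda>u. m u / (1 + u^2))"
    and b: "b < 2" and K: "K > 0" and C1: "C1 > 0" and C2: "C2 > 0"
    and small: "\<And>u. 0 < \<bar>u\<bar> \<Longrightarrow> \<bar>u\<bar> \<le> 1 \<Longrightarrow> m u \<le> K * \<bar>u\<bar> powr (- b)"
    and large: "\<And>u. 1 \<le> \<bar>u\<bar> \<Longrightarrow> m u \<le> C1 * exp (C2 * \<bar>u\<bar>)"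
  shows "\<exists>W :: real \<Rightarrow> fock \<Rightarrow> fock.
           (\<forall>t. cont_lin_G (W t)) \<and>
           (\<forall>t. \<forall>f\<in>G1.
              Gm1_tendsto (\<lambda>h. (\<lambda>ks. (Xm m (t + h) f ks - Xm m t f ks) / complex_of_real h))
                          (W t f) (at 0))"
proof -
  note m = meas less_imp_le[OF pos] int
  define W where "W t = field_operator (Tm_deriv_coeff m t)" for t
  have quotient_eq: "(\<lambda>ks. (Xm m (t + h) f ks - Xm m t f ks) / complex_of_real h)
      = field_operator (\<lambda>k. (Tm_coeff m (ind0 (t + h)) k - Tm_coeff m (ind0 t) k) / complex_of_real h) f"
    if "f \<in> G1" for t h f
    unfolding Xm_eq_field_operator using that norm_Tm_coeff_ind0_le[OF m]
    by (intro field_operator_diff_quotient Km1_summable_linear_bound G1_imp_fock_in_1)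
  show ?thesis
  proof (intro exI[of _ W] conjI allI ballI)
    show "cont_lin_G (W t)" for t
      unfolding W_def using norm_Tm_deriv_coeff_le[OF m]
      by (intro cont_lin_G_field_operator Km1_summable_linear_bound)
    show "Gm1_tendsto (\<lambda>h. (\<lambda>ks. (Xm m (t + h) f ks - Xm m t f ks) / complex_of_real h)) (W t f) (at 0)"
      if "f \<in> G1" for t f
      unfolding quotient_eq[OF that] W_def
      using norm_Tm_coeff_ind0_diff_quotient_le[OF m] norm_Tm_deriv_coeff_le[OF m]
        Tm_coeff_ind0_diff_quotient_tendsto[OF m] that
      by (rule Gm1_tendsto_field_operator)
  qed
qed

end
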